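(* Let $\mathcal{C}$, $\mathcal{F}$, $\prec$ be as in the context, let $\mathcal{Q}$ be a prime ideal of $\mathcal{C}$, let $h\in\mathcal{C}\smallsetminus\mathcal{Q}$, and let $g_1,\ldots,g_r\in\hat{\mathcal{D}}_n(\mathcal{C}[h^{-1}])\langle z\rangle\smallsetminus\hat{\mathcal{D}}_n(\mathcal{Q}[h^{-1}])\langle z\rangle$ be such that for each $j$ the numerator of $\mathrm{lc}^{\mathrm{mod}\mathcal{Q}}(g_j)$ divides $h$ in $\mathcal{C}$. Let $\Delta_1\cup\cdots\cup\Delta_r\cup\bar\Delta$ be the partition of $\mathbb{N}^{2n+1}$ associated with $e_j=\exp^{\mathrm{mod}\mathcal{Q}}(g_j)$, i.e. $\Delta_1=e_1+\mathbb{N}^{2n+1}$, $\Delta_j=(e_j+\mathbb{N}^{2n+1})\smallsetminus\bigcup_{k<j}\Delta_k$ for $j\ge2$, and $\bar\Delta=\mathbb{N}^{2n+1}\smallsetminus\bigcup_j\Delta_j$. Then for every $P\in\hat{\mathcal{D}}_n(\mathcal{C}[h^{-1}])\langle z\rangle$ there exist $q_1,\ldots,q_r,R,T\in\hat{\mathcal{D}}_n(\mathcal{F})\langle z\rangle$ such that (o) $P=\sum_j q_jg_j+R+T$; (i) if $q_j\neq0$ then $\mathrm{Supp}(q_j)+\exp^{\mathrm{mod}\mathcal{Q}}(g_j)\subset\Delta_j$; (ii) if $R\ne0$ then $\mathrm{Supp}(R)\subset\bar\Delta$; (iii) $q_1,\ldots,q_r,R\in\hat{\mathcal{D}}_n(\mathcal{C}[h^{-1}])\langle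 z\rangle$ and $T\in\hat{\mathcal{D}}_n(\mathcal{Q}[h^{-1}])\langle z\rangle$. Moreover $(q_1,\ldots,q_r,R)$ is unique modulo $\hat{\mathcal{D}}_n(\mathcal{Q}[h^{-1}])\langle z\rangle$: for any two such tuples, the differences of corresponding components lie in $\hat{\mathcal{D}}_n(\mathcal{Q}[h^{-1}])\langle z\rangle$.
   Context: $x=(x_1,\ldots,x_n)$. For a commutative ring $A$, $\hat{\mathcal{D}}_n(A)\langle z\rangle$ is the $A[[x]]$-algebra generated by $\partial_{x_1},\ldots,\partial_{x_n}$ and a central variable $z$, with commuting $\partial_{x_i}$ and $[\partial_{x_i},a]=\frac{\partial a}{\partial x_i}z$ for $a\in A[[x]]$; each element is written uniquely $P=\sum c_{\alpha\beta k}x^\alpha\partial_x^\beta z^k$ ($c_{\alpha\beta k}\in A$), and $\mathrm{Supp}(P)=\{(\alpha,\beta,k)\in\mathbb{N}^{2n+1}: c_{\alpha\beta k}\neq0\}$. $\mathcal{C}$ is a commutative integral domain with $1$ (not necessarily noetherian) such that no nonzero integer lies in a prime ideal of $\mathcal{C}$; $\mathcal{F}=\mathrm{Frac}(\mathcal{C})$. For a subring $A\subset\mathcal{F}$, $\hat{\mathcal{D}}_n(A)\langle z\rangle$ is viewed inside $\hat{\mathcal{D}}_n(\mathcal{F})\langle z\rangle$. For $h\in\mathcal{C}$, $\mathcal{C}[h^{-1}]$ is the localization, and $\hat{\mathcal{D}}_n(\mathcal{Q}[h^{-1}])\langle z\rangle$ is the set of elements of $\hat{\mathcal{D}}_n(\mathcal{C}[h^{-1}])\langle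 z\rangle$ all of whose coefficients are of the form $c/h^l$ with $c\in\mathcal{Q}$. $\mathcal{C}_\mathcal{Q}$ is the localization at $\mathcal{Q}$, and $\langle\mathcal{Q}\rangle$ is the set of elements of $\hat{\mathcal{D}}_n(\mathcal{F})\langle z\rangle$ whose coefficients are $c/c'$ with $c\in\mathcal{Q}$. An admissible order $\prec$ is a total order on $\mathbb{N}^{2n}$ compatible with addition (a monomial order on monomials $x^\alpha\xi^\beta$) with $x_i\prec1$ and $x_i\xi_i\succ1$ for all $i$. $\prec^h$ on $\mathbb{N}^{2n+1}$: $(\alpha,\beta,k)\prec^h(\alpha',\beta',k')$ iff $|\beta|+k<|\beta'|+k'$, or equality and $(\alpha,\beta)\prec(\alpha',\beta')$. Fix an admissible $\prec$; all maxima below are for $\prec^h$. For $P\in\hat{\mathcal{D}}_n(\mathcal{C}_\mathcal{Q})\langle z\rangle\smallsetminus\langle\mathcal{Q}\rangle$, write its coefficients as $c_{\alpha\beta k}/c'_{\alpha\beta k}$ with $c'_{\alpha\beta k}\notin\mathcal{Q}$; $\exp^{\mathrm{mod}\mathcal{Q}}(P)$ is the $\prec^h$-maximum of the $(\alpha,\beta,k)$ with $c_{\alpha\beta k}\notin\mathcal{Q}$, $\mathrm{lc}^{\mathrm{mod}\mathcal{Q}}(P)$ is the coefficient $c/c'$ of $P$ at that exponent (its numerator is $c$), and $\mathrm{lm}^{\mathrm{mod}\mathcal{Q}}(P)$ is the corresponding term. *)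

theory Defs
  imports "HOL-Computational_Algebra.Fraction_Field"
begin

definition is_ideal :: "'a::comm_ring_1 set \<Rightarrow> bool" where
  "is_ideal I \<longleftrightarrow> 0 \<in> I \<and> (\<forall>a\<in>I. \<forall>b\<in>I. a + b \<in> I) \<and> (\<forall>a\<in>I. \<forall>r. r * a \<in> I)"

definition is_prime_ideal :: "'a::comm_ring_1 set \<Rightarrow> bool" where
  "is_prime_ideal I \<longleftrightarrow> is_ideal I \<and> 1 \<notin> I \<and> (\<forall>a b. a * b \<in> I \<longrightarrow> a \<in> I \<or> b \<in> I)"

definition no_int_in_primes :: "'a::comm_ring_1 itself \<Rightarrow> bool" where
  "no_int_in_primes _ \<longleftrightarrow> (\<forall>P :: 'a set. is_prime_ideal P \<longrightarrow> (\<forall>m::int. of_int m \<in> P \<longrightarrow> m = 0))"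

text \<open>The index type 'n (finite) stands for {1..n}. An exponent (alpha, beta, k) of
  x^alpha d^beta z^k is a triple in N^n x N^n x N. An element of hat D_n(F)<z> is given by
  its coefficient function (alpha, beta, k) |-> c_{alpha beta k}; it is a formal power
  series in x and a polynomial in d and z, i.e. only finitely many (beta,k) occur.\<close>

type_synonym 'n mexp = "('n \<Rightarrow> nat) \<times> ('n \<Rightarrow> nat) \<times> nat"
type_synonym ('n, 'f) dop = "('n \<Rightarrow> nat) \<Rightarrow> ('n \<Rightarrow> nat) \<Rightarrow> nat \<Rightarrow> 'f"

definition supp :: "('n, 'f::zero) dop \<Rightarrow> 'n mexp set" where
  "supp P = {(a, b, k). P a b k \<noteq> 0}"

definition wf_dop :: "('n, 'f::zero) dop \<Rightarrow> bool" where
  "wf_dop P \<longleftrightarrow> finite {(b, k). \<exists>a. P a b k \<noteq> 0}"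

definition dop_over :: "'f::zero set \<Rightarrow> ('n, 'f) dop set" where
  "dop_over A = {P. wf_dop P \<and> (\<forall>a b k. P a b k \<in> A)}"

definition dzero :: "('n, 'f::zero) dop" where
  "dzero = (\<lambda>a b k. 0)"

definition dadd :: "('n, 'f::plus) dop \<Rightarrow> ('n, 'f) dop \<Rightarrow> ('n, 'f) dop" where
  "dadd P Q = (\<lambda>a b k. P a b k + Q a b k)"

definition dminus :: "('n, 'f::minus) dop \<Rightarrow> ('n, 'f) dop \<Rightarrow> ('n, 'f) dop" where
  "dminus P Q = (\<lambda>a b k. P a b k - Q a b k)"

text \<open>Product in hat D_n(F)<z>, from the commutation rule [d_i, a] = (da/dx_i) z:
  (x^al d^be z^k)(x^ga d^de z^l) =
     sum_{mu <= be, mu <= ga} (be choose mu) ga!/(ga-mu)! x^(al+ga-mu) d^(be-mu+de) z^(k+l+|mu|).\<close>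
definition dmult :: "('n::finite, 'f::field) dop \<Rightarrow> ('n, 'f) dop \<Rightarrow> ('n, 'f) dop" where
  "dmult P Q = (\<lambda>a b m.
     \<Sum>(al, be, k, ga, de, l, mu) \<in>
       {(al, be, k, ga, de, l, mu).
          (\<forall>i. mu i \<le> be i \<and> mu i \<le> ga i \<and> al i + (ga i - mu i) = a i \<and> be i - mu i + de i = b i)
          \<and> k + l + (\<Sum>i\<in>UNIV. mu i) = m \<and> P al be k \<noteq> 0 \<and> Q ga de l \<noteq> 0}.
       P al be k * Q ga de l *
       of_nat (\<Prod>i\<in>UNIV. (be i choose mu i) * (fact (ga i) div fact (ga i - mu i))))"

text \<open>An admissible order: a strict total order on N^n x N^n (pairs (alpha, beta) standing for
  x^alpha xi^beta), compatible with addition, with x_i < 1 and 1 < x_i xi_i.\<close>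
definition admissible :: "(('n \<Rightarrow> nat) \<times> ('n \<Rightarrow> nat) \<Rightarrow> ('n \<Rightarrow> nat) \<times> ('n \<Rightarrow> nat) \<Rightarrow> bool) \<Rightarrow> bool" where
  "admissible ord \<longleftrightarrow>
     (\<forall>u. \<not> ord u u) \<and> (\<forall>u v w. ord u v \<longrightarrow> ord v w \<longrightarrow> ord u w) \<and>
     (\<forall>u v. u \<noteq> v \<longrightarrow> ord u v \<or> ord v u) \<and>
     (\<forall>a b a' b' c d. ord (a, b) (a', b') \<longrightarrow>
        ord (\<lambda>i. a i + c i, \<lambda>i. b i + d i) (\<lambda>i. a' i + c i, \<lambda>i. b' i + d i)) \<and>
     (\<forall>i. ord (\<lambda>j. if j = i then 1 else 0, \<lambda>j. 0) (\<lambda>j. 0, \<lambda>j. 0)) \<and>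
     (\<forall>i. ord (\<lambda>j. 0, \<lambda>j. 0) (\<lambda>j. if j = i then 1 else 0, \<lambda>j. if j = i then 1 else 0))"

definition ordh :: "(('n \<Rightarrow> nat) \<times> ('n \<Rightarrow> nat) \<Rightarrow> ('n \<Rightarrow> nat) \<times> ('n \<Rightarrow> nat) \<Rightarrow> bool)
                     \<Rightarrow> 'n::finite mexp \<Rightarrow> 'n mexp \<Rightarrow> bool" where
  "ordh ord e e' = (case e of (a, b, k) \<Rightarrow> case e' of (a', b', k') \<Rightarrow>
      (\<Sum>i\<in>UNIV. b i) + k < (\<Sum>i\<in>UNIV. b' i) + k' \<or>
      ((\<Sum>i\<in>UNIV. b i) + k = (\<Sum>i\<in>UNIV. b' i) + k' \<and> ord (a, b) (a', b')))"

definition loc_h :: "'c::idom \<Rightarrow> 'c fract set" where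
  "loc_h h = {u. \<exists>c l. u = Fract c (h ^ l)}"

definition locQ_h :: "'c::idom set \<Rightarrow> 'c \<Rightarrow> 'c fract set" where
  "locQ_h Q h = {u. \<exists>c\<in>Q. \<exists>l. u = Fract c (h ^ l)}"

definition loc_at :: "'c::idom set \<Rightarrow> 'c fract set" where
  "loc_at Q = {u. \<exists>c c'. c' \<notin> Q \<and> u = Fract c c'}"

text \<open>Coefficients belonging to \<langle>Q\<rangle> (inside C_Q): of the form c/c' with c in Q, c' not in Q.\<close>
definition coeffQ :: "'c::idom set \<Rightarrow> 'c fract set" where
  "coeffQ Q = {u. \<exists>c c'. c \<in> Q \<and> c' \<notin> Q \<and> u = Fract c c'}"

definition exp_modQ ::
  "(('n \<Rightarrow> nat) \<times> ('n \<Rightarrow> nat) \<Rightarrow> ('n \<Rightarrow> nat) \<times> ('n \<Rightarrow> nat) \<Rightarrow> bool)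
    \<Rightarrow> 'c::idom set \<Rightarrow> ('n::finite, 'c fract) dop \<Rightarrow> 'n mexp" where
  "exp_modQ ord Q P =
     (THE e. e \<in> {(a, b, k). P a b k \<notin> coeffQ Q} \<and>
        (\<forall>e' \<in> {(a, b, k). P a b k \<notin> coeffQ Q}. e' \<noteq> e \<longrightarrow> ordh ord e' e))"

definition lc_modQ ::
  "(('n \<Rightarrow> nat) \<times> ('n \<Rightarrow> nat) \<Rightarrow> ('n \<Rightarrow> nat) \<times> ('n \<Rightarrow> nat) \<Rightarrow> bool)
    \<Rightarrow> 'c::idom set \<Rightarrow> ('n::finite, 'c fract) dop \<Rightarrow> 'c fract" where
  "lc_modQ ord Q P = (case exp_modQ ord Q P of (a, b, k) \<Rightarrow> P a b k)"

text \<open>"The numerator of lc^{mod Q}(g) divides h": lc is written c/c' with c' not in Q and c dvd h.\<close>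
definition lc_num_dvd :: "'c::idom set \<Rightarrow> 'c fract \<Rightarrow> 'c \<Rightarrow> bool" where
  "lc_num_dvd Q u h \<longleftrightarrow> (\<exists>c c'. c' \<notin> Q \<and> u = Fract c c' \<and> c dvd h)"

definition mexp_add :: "'n mexp \<Rightarrow> 'n mexp \<Rightarrow> 'n mexp" where
  "mexp_add e f = (case e of (a, b, k) \<Rightarrow> case f of (a', b', k') \<Rightarrow>
      ((\<lambda>i. a i + a' i), (\<lambda>i. b i + b' i), k + k'))"

definition cone :: "'n mexp \<Rightarrow> 'n mexp set" where
  "cone e = {mexp_add e f | f. True}"

text \<open>Delta_j = (e_j + N^{2n+1}) minus the union of Delta_k, k < j  (indices from 0).\<close>
definition Delta :: "(nat \<Rightarrow> 'n mexp) \<Rightarrow> nat \<Rightarrow> 'n mexp set" where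
  "Delta e j = cone (e j) - (\<Union>k<j. cone (e k))"

definition Delta_bar :: "(nat \<Rightarrow> 'n mexp) \<Rightarrow> nat \<Rightarrow> 'n mexp set" where
  "Delta_bar e r = UNIV - (\<Union>j<r. Delta e j)"

definition division_rep ::
  "(('n \<Rightarrow> nat) \<times> ('n \<Rightarrow> nat) \<Rightarrow> ('n \<Rightarrow> nat) \<times> ('n \<Rightarrow> nat) \<Rightarrow> bool)
    \<Rightarrow> 'c::idom set \<Rightarrow> 'c \<Rightarrow> nat \<Rightarrow> (nat \<Rightarrow> ('n::finite, 'c fract) dop) \<Rightarrow> ('n, 'c fract) dop
    \<Rightarrow> (nat \<Rightarrow> ('n, 'c fract) dop) \<Rightarrow> ('n, 'c fract) dop \<Rightarrow> ('n, 'c fract) dop \<Rightarrow> bool" where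
  "division_rep ord Q h r g P q R T \<longleftrightarrow>
     (\<forall>j<r. q j \<in> dop_over UNIV) \<and> R \<in> dop_over UNIV \<and> T \<in> dop_over UNIV \<and>
     P = dadd (dadd (\<lambda>a b k. \<Sum>j<r. dmult (q j) (g j) a b k) R) T \<and>
     (\<forall>j<r. q j \<noteq> dzero \<longrightarrow>
        (\<forall>e\<in>supp (q j). mexp_add e (exp_modQ ord Q (g j)) \<in> Delta (\<lambda>i. exp_modQ ord Q (g i)) j)) \<and>
     (R \<noteq> dzero \<longrightarrow> supp R \<subseteq> Delta_bar (\<lambda>i. exp_modQ ord Q (g i)) r) \<and>
     (\<forall>j<r. q j \<in> dop_over (loc_h h)) \<and> R \<in> dop_over (loc_h h) \<and> T \<in> dop_over (locQ_h Q h)"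

end

theory Submission
  imports Defs "HOL-Library.Infinite_Set" "HOL-Library.FuncSet" "HOL-Library.Function_Algebras"
    "HOL-Library.Product_Plus"
begin

(* Everything is done coefficientwise modulo Q[1/h].  Among exponents of bounded total degree in
   (d, z) the order <h admits no infinite ascending chain (Dickson's lemma together with x_i < 1),
   so the division algorithm can be run downwards along <h by well-founded recursion: at an
   exponent e the residue, i.e. the coefficient of P minus the contributions at e of the quotient
   terms already fixed above e, goes to q_j at e - exp(g_j) if e lies in Delta_j (divided by
   lc(g_j), which is invertible in C[1/h] because its numerator divides h), and to R if e lies in
   the complement of all Delta_j.  A product term x^a d^b z^k g_j contributes to e only at or below
   (a, b, k) + exp(g_j), and apart from the plain product with the leading term only through
   coefficients of g_j in <Q>, i.e. in Q[1/h]; all of these are collected in T.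

   Uniqueness is the same recursion read backwards: if sum_j q_j g_j + R lies in Q[1/h] and all
   quotient coefficients above e do, then the coefficient at e of the unique cell containing e
   does as well, because Q is prime and lc(g_j) is not in <Q>. *)

section \<open>Exponents\<close>

lemma mexp_add_eq_plus: "mexp_add e f = e + f"
  by (cases e; cases f) (simp add: mexp_add_def plus_fun_def)

lemma cone_iff: "x \<in> cone e \<longleftrightarrow> (\<exists>f. x = e + f)"
  by (simp add: cone_def mexp_add_eq_plus)

definition mexp_deg :: "'n::finite mexp \<Rightarrow> nat" where
  "mexp_deg e = (case e of (a, b, k) \<Rightarrow> (\<Sum>i\<in>UNIV. b i) + k)"

lemma mexp_deg_simp [simp]: "mexp_deg (a, b, k) = (\<Sum>i\<in>UNIV. b i) + k"
  by (simp add: mexp_deg_def)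

lemma mexp_deg_add [simp]: "mexp_deg (e + f) = mexp_deg e + mexp_deg f"
  by (cases e; cases f) (simp add: sum.distrib)

definition unit_vec :: "'n \<Rightarrow> 'n \<Rightarrow> nat" where
  "unit_vec i = (\<lambda>j. if j = i then 1 else 0)"

lemma nat_vec_induct [case_names zero add_unit]:
  fixes mu :: "'n::finite \<Rightarrow> nat"
  assumes "P 0" and "\<And>mu i. P mu \<Longrightarrow> P (mu + unit_vec i)"
  shows "P mu"
proof -
  have "sum mu UNIV = n \<Longrightarrow> P mu" for n mu
  proof (induction n arbitrary: mu)
    case 0
    then show ?case using assms(1) by (simp add: zero_fun_def fun_eq_iff)
  next
    case (Suc n)
    then obtain i where "mu i > 0"
      by (metis gr0I sum.neutral nat.distinct(1))
    define mu' where "mu' = mu(i := mu i - 1)"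
    have mu: "mu = mu' + unit_vec i"
      using \<open>mu i > 0\<close> by (auto simp: mu'_def unit_vec_def fun_eq_iff)
    have "sum mu UNIV = sum mu' UNIV + 1"
      by (subst mu) (simp add: sum.distrib unit_vec_def)
    then have "P mu'" using Suc by simp
    then show ?case using assms(2) mu by metis
  qed
  then show ?thesis by blast
qed

lemma infinite_subset_monotone:
  fixes s :: "nat \<Rightarrow> nat"
  assumes "infinite N"
  obtains N' where "N' \<subseteq> N" "infinite N'" "\<forall>k\<in>N'. \<forall>k'\<in>N'. k < k' \<longrightarrow> s k \<le> s k'"
proof -
  define N' where "N' = {k\<in>N. \<forall>k'\<in>N. k < k' \<longrightarrow> s k \<le> s k'}"
  have "\<exists>k\<ge>n. k \<in> N'" for n
  proof -
    obtain k0 where "k0 \<in> N" "n \<le> k0"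
      using assms unfolding infinite_nat_iff_unbounded_le by blast
    then obtain k where k: "k \<in> N" "n \<le> k" and min: "\<And>k'. k' \<in> N \<Longrightarrow> n \<le> k' \<Longrightarrow> s k \<le> s k'"
      using ex_has_least_nat[of "\<lambda>k. k \<in> N \<and> n \<le> k" k0 s] by blast
    have "k \<in> N'"
      unfolding N'_def using k min by simp
    with k show ?thesis by blast
  qed
  then have "infinite N'"
    unfolding infinite_nat_iff_unbounded_le by blast
  moreover have "N' \<subseteq> N" "\<forall>k\<in>N'. \<forall>k'\<in>N'. k < k' \<longrightarrow> s k \<le> s k'"
    unfolding N'_def by auto
  ultimately show ?thesis using that by blast
qed

lemma infinite_subset_monotone_family:
  fixes s :: "'i \<Rightarrow> nat \<Rightarrow> nat"
  assumes "finite I" and "infinite N"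
  shows "\<exists>N' \<subseteq> N. infinite N' \<and> (\<forall>k\<in>N'. \<forall>k'\<in>N'. k < k' \<longrightarrow> (\<forall>i\<in>I. s i k \<le> s i k'))"
  using assms
proof (induction I arbitrary: N rule: finite_induct)
  case (insert x I)
  then obtain N1 where N1: "N1 \<subseteq> N" "infinite N1"
    and mono: "\<forall>k\<in>N1. \<forall>k'\<in>N1. k < k' \<longrightarrow> (\<forall>i\<in>I. s i k \<le> s i k')"
    by blast
  obtain N2 where "N2 \<subseteq> N1" "infinite N2" "\<forall>k\<in>N2. \<forall>k'\<in>N2. k < k' \<longrightarrow> s x k \<le> s x k'"
    using infinite_subset_monotone[OF N1(2)] by blast
  with N1 mono show ?case
    by (intro exI[of _ N2]) blast
qed blast

lemma mexp_dickson:
  fixes s :: "nat \<Rightarrow> 'n::finite mexp"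
  assumes "infinite N"
  obtains i j where "i \<in> N" "j \<in> N" "i < j" "s j \<in> cone (s i)"
proof -
  define c where "c x k = (case x of
      None \<Rightarrow> snd (snd (s k)) | Some (Inl i) \<Rightarrow> fst (s k) i | Some (Inr i) \<Rightarrow> fst (snd (s k)) i)"
    for x :: "('n + 'n) option" and k
  obtain N' where N': "N' \<subseteq> N" "infinite N'"
    and mono: "\<forall>k\<in>N'. \<forall>k'\<in>N'. k < k' \<longrightarrow> (\<forall>x\<in>UNIV. c x k \<le> c x k')"
    using infinite_subset_monotone_family[OF finite_UNIV assms] by blast
  obtain i where i: "i \<in> N'"
    using infinite_imp_nonempty[OF N'(2)] by blast
  obtain j where j: "j \<in> N'" "i < j"
    using N'(2) unfolding infinite_nat_iff_unbounded by blast
  obtain a b k a' b' k' where ij: "s i = (a, b, k)" "s j = (a', b', k')"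
    by (metis prod.exhaust)
  have le: "c x i \<le> c x j" for x
    using mono i j by blast
  have "a y \<le> a' y" "b y \<le> b' y" for y
    using le[of "Some (Inl y)"] le[of "Some (Inr y)"] by (simp_all add: c_def ij)
  moreover have "k \<le> k'"
    using le[of None] by (simp add: c_def ij)
  ultimately have "s j = s i + (a' - a, b' - b, k' - k)"
    by (simp add: ij fun_eq_iff)
  then show ?thesis
    using that i j N'(1) unfolding cone_iff by blast
qed

lemma Delta_subset_cone: "Delta E j \<subseteq> cone (E j)"
  unfolding Delta_def by blast

lemma Delta_disjoint: "x \<in> Delta E j \<Longrightarrow> x \<in> Delta E k \<Longrightarrow> j = k"
  unfolding Delta_def by (metis DiffD1 DiffD2 UN_I lessThan_iff linorder_neqE_nat)

lemma Delta_bar_iff: "x \<in> Delta_bar E r \<longleftrightarrow> (\<forall>j<r. x \<notin> Delta E j)"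
  unfolding Delta_bar_def by blast

lemma Delta_partition_sum:
  "(\<Sum>j<r. if x \<in> Delta E j then c else 0) + (if x \<in> Delta_bar E r then c else 0) = c"
proof (cases "x \<in> Delta_bar E r")
  case True
  then show ?thesis by (simp add: Delta_bar_iff)
next
  case False
  then obtain j0 where "j0 < r" "x \<in> Delta E j0"
    by (auto simp: Delta_bar_iff)
  then have "x \<in> Delta E j \<longleftrightarrow> j = j0" for j
    using Delta_disjoint by blast
  then have "(\<Sum>j<r. if x \<in> Delta E j then c else 0) = (\<Sum>j<r. if j = j0 then c else 0)"
    by simp
  with \<open>j0 < r\<close> False show ?thesis
    by simp
qed

section \<open>Admissible orders\<close>

locale admissible_order =
  fixes ord :: "('n::finite \<Rightarrow> nat) \<times> ('n \<Rightarrow> nat) \<Rightarrow> ('n \<Rightarrow> nat) \<times> ('n \<Rightarrow> nat) \<Rightarrow> bool"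
  assumes admissible: "admissible ord"
begin

lemma ord_irrefl: "\<not> ord u u"
  using admissible unfolding admissible_def by blast

lemma ord_trans: "ord u v \<Longrightarrow> ord v w \<Longrightarrow> ord u w"
  using admissible unfolding admissible_def by blast

lemma ord_linear: "u \<noteq> v \<Longrightarrow> ord u v \<or> ord v u"
  using admissible unfolding admissible_def by blast

lemma ord_add_right: "ord (a, b) (a', b') \<Longrightarrow> ord (a + c, b + d) (a' + c, b' + d)"
  using admissible unfolding admissible_def plus_fun_def by blast

lemma ord_add_left: "ord (a, b) (a', b') \<Longrightarrow> ord (c + a, d + b) (c + a', d + b')"
  using ord_add_right by (simp add: add.commute)

lemma ord_unit_x_less_one: "ord (unit_vec i, 0) (0, 0)"
  using admissible unfolding admissible_def unit_vec_def zero_fun_def by blast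

lemma ord_one_less_unit_x_xi: "ord (0, 0) (unit_vec i, unit_vec i)"
  using admissible unfolding admissible_def unit_vec_def zero_fun_def by blast

lemma ord_x_less_one: "c \<noteq> 0 \<Longrightarrow> ord (c, 0) (0, 0)"
proof (induction c rule: nat_vec_induct)
  case (add_unit c i)
  have step: "ord (c + unit_vec i, 0) (c, 0)"
    using ord_add_left[OF ord_unit_x_less_one[of i], of c 0] by (simp only: add_0_right)
  show ?case
  proof (cases "c = 0")
    case True
    then show ?thesis using ord_unit_x_less_one[of i] by (simp only: add_0_left)
  next
    case False
    then show ?thesis using add_unit.IH step ord_trans by blast
  qed
qed simp

lemma ord_one_less_x_xi: "mu \<noteq> 0 \<Longrightarrow> ord (0, 0) (mu, mu)"
proof (induction mu rule: nat_vec_induct)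
  case (add_unit mu i)
  have step: "ord (mu, mu) (mu + unit_vec i, mu + unit_vec i)"
    using ord_add_left[OF ord_one_less_unit_x_xi[of i], of mu mu] by (simp only: add_0_right)
  show ?case
  proof (cases "mu = 0")
    case True
    then show ?thesis using ord_one_less_unit_x_xi[of i] by (simp only: add_0_left)
  next
    case False
    then show ?thesis using add_unit.IH step ord_trans by blast
  qed
qed simp

abbreviation less_h (infix "\<prec>\<^sub>h" 50) where
  "less_h \<equiv> ordh ord"

lemma less_h_iff:
  "e \<prec>\<^sub>h e' \<longleftrightarrow> mexp_deg e < mexp_deg e' \<or>
     (mexp_deg e = mexp_deg e' \<and> ord (fst e, fst (snd e)) (fst e', fst (snd e')))"
  by (cases e; cases e') (simp add: ordh_def)

lemma less_h_irrefl: "\<not> e \<prec>\<^sub>h e"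
  by (simp add: less_h_iff ord_irrefl)

lemma less_h_trans: "e1 \<prec>\<^sub>h e2 \<Longrightarrow> e2 \<prec>\<^sub>h e3 \<Longrightarrow> e1 \<prec>\<^sub>h e3"
  unfolding less_h_iff using ord_trans by auto

lemma less_h_asym: "e1 \<prec>\<^sub>h e2 \<Longrightarrow> \<not> e2 \<prec>\<^sub>h e1"
  using less_h_trans less_h_irrefl by blast

lemma less_h_linear:
  assumes "e1 \<noteq> e2" shows "e1 \<prec>\<^sub>h e2 \<or> e2 \<prec>\<^sub>h e1"
proof (cases "mexp_deg e1 = mexp_deg e2")
  case True
  with assms have "(fst e1, fst (snd e1)) \<noteq> (fst e2, fst (snd e2))"
    by (cases e1; cases e2) auto
  then have "ord (fst e1, fst (snd e1)) (fst e2, fst (snd e2)) \<or>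
      ord (fst e2, fst (snd e2)) (fst e1, fst (snd e1))"
    by (rule ord_linear)
  with True show ?thesis unfolding less_h_iff by argo
qed (auto simp: less_h_iff)

lemma less_h_imp_deg_le: "e1 \<prec>\<^sub>h e2 \<Longrightarrow> mexp_deg e1 \<le> mexp_deg e2"
  by (auto simp: less_h_iff)

lemma less_h_add_right: "e \<prec>\<^sub>h e' \<Longrightarrow> e + f \<prec>\<^sub>h e' + f"
  using ord_add_right[of "fst e" "fst (snd e)" "fst e'" "fst (snd e')" "fst f" "fst (snd f)"]
  by (cases e; cases e'; cases f) (auto simp: less_h_iff sum.distrib)

lemma less_h_add_left: "e \<prec>\<^sub>h e' \<Longrightarrow> f + e \<prec>\<^sub>h f + e'"
  by (metis less_h_add_right add.commute)

lemma less_h_add_x: "c \<noteq> 0 \<Longrightarrow> e + (c, 0, 0) \<prec>\<^sub>h e"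
  using ord_add_left[OF ord_x_less_one, of c "fst e" "fst (snd e)"]
  by (cases e) (simp add: less_h_iff)

lemma cone_same_deg_not_less_h:
  assumes "e' \<in> cone e" and "mexp_deg e' = mexp_deg e"
  shows "\<not> e \<prec>\<^sub>h e'"
proof -
  obtain c b k where e': "e' = e + (c, b, k)"
    using assms(1) unfolding cone_iff by (metis prod.exhaust)
  with assms(2) have "sum b UNIV = 0" "k = 0"
    by simp_all
  then have e'_eq: "e' = e + (c, 0, 0)"
    using e' by (simp add: fun_eq_iff)
  show ?thesis
  proof (cases "c = 0")
    case True
    then have "e' = e"
      using e'_eq by (simp add: zero_prod_def[symmetric])
    then show ?thesis
      using less_h_irrefl by simp
  next
    case False
    then have "e' \<prec>\<^sub>h e"
      using e'_eq less_h_add_x by simp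
    then show ?thesis
      using less_h_asym by blast
  qed
qed

definition above_bounded :: "nat \<Rightarrow> ('n mexp \<times> 'n mexp) set" where
  "above_bounded D = {(e', e). mexp_deg e' \<le> D \<and> e \<prec>\<^sub>h e'}"

lemma wf_above_bounded: "wf (above_bounded D)"
proof -
  have False if chain: "\<forall>i. (s (Suc i), s i) \<in> above_bounded D" for s
  proof -
    have step: "s i \<prec>\<^sub>h s (Suc i)" for i
      using chain by (simp add: above_bounded_def)
    have ascending: "i < j \<Longrightarrow> s i \<prec>\<^sub>h s j" for i j
    proof (induction j)
      case (Suc j)
      show ?case
      proof (cases "i = j")
        case True
        then show ?thesis using step by simp
      next
        case False
        with Suc have "s i \<prec>\<^sub>h s j" by simp
        then show ?thesis using step less_h_trans by blast
      qed
    qed simp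
    have bound: "mexp_deg (s (Suc i)) \<le> D" for i
      using chain by (simp add: above_bounded_def)
    have "mexp_deg (s i) \<le> D" for i
      by (rule order_trans[OF less_h_imp_deg_le[OF step] bound])
    then have "range (\<lambda>i. mexp_deg (s i)) \<subseteq> {..D}"
      by auto
    then have "finite (range (\<lambda>i. mexp_deg (s i)))"
      by (rule finite_subset) simp
    then obtain d where "infinite ((\<lambda>i. mexp_deg (s i)) -` {d} \<inter> UNIV)"
      using inf_img_fin_domE'[OF _ infinite_UNIV_nat] by blast
    then have "infinite {i. mexp_deg (s i) = d}"
      by (simp add: vimage_def)
    then obtain i j where "i < j" "mexp_deg (s i) = d" "mexp_deg (s j) = d" "s j \<in> cone (s i)"
      by (rule mexp_dickson[where s = s]) blast
    then show False
      using ascending cone_same_deg_not_less_h by metis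
  qed
  then show ?thesis
    using wf_iff_no_infinite_down_chain by blast
qed

lemma bounded_has_greatest:
  assumes "S \<noteq> {}" and "\<forall>e\<in>S. mexp_deg e \<le> D"
  obtains e where "e \<in> S" "\<forall>e'\<in>S. e' \<noteq> e \<longrightarrow> e' \<prec>\<^sub>h e"
proof -
  obtain e where "e \<in> S" and max: "\<And>e'. (e', e) \<in> above_bounded D \<Longrightarrow> e' \<notin> S"
    using wfE_min[OF wf_above_bounded] assms(1) by blast
  then have "e' \<prec>\<^sub>h e" if "e' \<in> S" "e' \<noteq> e" for e'
    using that assms(2) less_h_linear unfolding above_bounded_def by blast
  then show ?thesis using that \<open>e \<in> S\<close> by blast
qed

end

section \<open>Localizations\<close>

locale prime_localization =
  fixes Q :: "'c::idom set" and h :: 'c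
  assumes prime_Q: "is_prime_ideal Q" and h_notin_Q: "h \<notin> Q"
begin

lemma zero_in_Q: "0 \<in> Q"
  using prime_Q by (simp add: is_prime_ideal_def is_ideal_def)

lemma add_in_Q: "a \<in> Q \<Longrightarrow> b \<in> Q \<Longrightarrow> a + b \<in> Q"
  using prime_Q by (simp add: is_prime_ideal_def is_ideal_def)

lemma mult_in_Q: "a \<in> Q \<Longrightarrow> c * a \<in> Q"
  using prime_Q by (simp add: is_prime_ideal_def is_ideal_def)

lemma mult_in_Q': "a \<in> Q \<Longrightarrow> a * c \<in> Q"
  using mult_in_Q by (metis mult.commute)

lemma uminus_in_Q: "a \<in> Q \<Longrightarrow> - a \<in> Q"
  using mult_in_Q[of a "- 1"] by simp

lemma prime_Q_mult: "a * b \<in> Q \<Longrightarrow> a \<in> Q \<or> b \<in> Q"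
  using prime_Q by (simp add: is_prime_ideal_def)

lemma power_h_notin_Q: "h ^ l \<notin> Q"
proof (induction l)
  case 0
  then show ?case using prime_Q by (simp add: is_prime_ideal_def)
next
  case (Suc l)
  then show ?case using h_notin_Q prime_Q_mult by auto
qed

lemma power_h_nonzero: "h ^ l \<noteq> 0"
  using power_h_notin_Q zero_in_Q by metis

abbreviation Ch :: "'c fract set" where
  "Ch \<equiv> loc_h h"

abbreviation Qh :: "'c fract set" where
  "Qh \<equiv> locQ_h Q h"

abbreviation QCQ :: "'c fract set" where
  "QCQ \<equiv> coeffQ Q"

lemma Ch_add: "x \<in> Ch \<Longrightarrow> y \<in> Ch \<Longrightarrow> x + y \<in> Ch"
  unfolding loc_h_def using power_h_nonzero by (auto simp: power_add[symmetric]) blast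

lemma Ch_mult: "x \<in> Ch \<Longrightarrow> y \<in> Ch \<Longrightarrow> x * y \<in> Ch"
  unfolding loc_h_def by (auto simp: power_add[symmetric]) blast

lemma Ch_minus:
  assumes "x \<in> Ch"
  shows "- x \<in> Ch"
proof -
  obtain c l where "x = Fract c (h ^ l)"
    using assms unfolding loc_h_def by blast
  then have "- x = Fract (- c) (h ^ l)"
    by simp
  then show ?thesis
    unfolding loc_h_def by blast
qed

lemma Ch_diff: "x \<in> Ch \<Longrightarrow> y \<in> Ch \<Longrightarrow> x - y \<in> Ch"
  using Ch_add Ch_minus by (metis diff_conv_add_uminus)

lemma Ch_of_nat: "of_nat n \<in> Ch"
proof -
  have "of_nat n = Fract (of_nat n) (h ^ 0)"
    by (simp add: of_nat_fract)
  then show ?thesis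
    unfolding loc_h_def by blast
qed

lemma Ch_0: "0 \<in> Ch"
  using Ch_of_nat[of 0] by simp

lemma Ch_sum: "(\<And>x. x \<in> A \<Longrightarrow> f x \<in> Ch) \<Longrightarrow> sum f A \<in> Ch"
  by (induction A rule: infinite_finite_induct) (auto simp: Ch_0 Ch_add)

lemma inverse_in_Ch:
  assumes "lc_num_dvd Q u h"
  shows "inverse u \<in> Ch"
proof -
  obtain c c' where u: "u = Fract c c'" and "c dvd h"
    using assms unfolding lc_num_dvd_def by blast
  then obtain m where "h = c * m"
    by (auto elim: dvdE)
  then have "m \<noteq> 0"
    using power_h_nonzero[of 1] by auto
  then have "inverse u = Fract (m * c') (m * c)"
    using u by (simp add: mult_fract_cancel)
  also have "m * c = h ^ 1"
    using \<open>h = c * m\<close> by (simp add: mult.commute)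
  finally have "inverse u = Fract (m * c') (h ^ 1)" .
  then show ?thesis
    unfolding loc_h_def by blast
qed

lemma Qh_add: "x \<in> Qh \<Longrightarrow> y \<in> Qh \<Longrightarrow> x + y \<in> Qh"
  unfolding locQ_h_def using power_h_nonzero
  by (auto simp: power_add[symmetric]) (metis add_in_Q mult_in_Q')

lemma Qh_minus:
  assumes "x \<in> Qh"
  shows "- x \<in> Qh"
proof -
  obtain c l where "c \<in> Q" "x = Fract c (h ^ l)"
    using assms unfolding locQ_h_def by blast
  then have "- c \<in> Q" "- x = Fract (- c) (h ^ l)"
    using uminus_in_Q by simp_all
  then show ?thesis
    unfolding locQ_h_def by blast
qed

lemma Qh_diff: "x \<in> Qh \<Longrightarrow> y \<in> Qh \<Longrightarrow> x - y \<in> Qh"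
  using Qh_add Qh_minus by (metis diff_conv_add_uminus)

lemma Qh_0: "0 \<in> Qh"
proof -
  have "0 = Fract 0 (h ^ 0)"
    by (simp add: fract_collapse)
  then show ?thesis
    unfolding locQ_h_def using zero_in_Q by blast
qed

lemma Qh_sum: "(\<And>x. x \<in> A \<Longrightarrow> f x \<in> Qh) \<Longrightarrow> sum f A \<in> Qh"
  by (induction A rule: infinite_finite_induct) (auto simp: Qh_0 Qh_add)

lemma Qh_mult_left: "x \<in> Ch \<Longrightarrow> y \<in> Qh \<Longrightarrow> x * y \<in> Qh"
  unfolding loc_h_def locQ_h_def by (auto simp: power_add[symmetric]) (metis mult_in_Q)

lemma Qh_mult_right: "x \<in> Qh \<Longrightarrow> y \<in> Ch \<Longrightarrow> x * y \<in> Qh"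
  using Qh_mult_left by (metis mult.commute)

lemma Qh_subset_QCQ: "x \<in> Qh \<Longrightarrow> x \<in> QCQ"
  unfolding locQ_h_def coeffQ_def using power_h_notin_Q by blast

lemma nonzero_if_notin_QCQ: "x \<notin> QCQ \<Longrightarrow> x \<noteq> 0"
  using Qh_subset_QCQ Qh_0 by blast

lemma Ch_QCQ_imp_Qh:
  assumes "x \<in> Ch" and "x \<in> QCQ"
  shows "x \<in> Qh"
proof -
  obtain c l where x: "x = Fract c (h ^ l)"
    using assms(1) unfolding loc_h_def by blast
  obtain d d' where "d \<in> Q" "d' \<notin> Q" "x = Fract d d'"
    using assms(2) unfolding coeffQ_def by blast
  moreover have "d' \<noteq> 0"
    using \<open>d' \<notin> Q\<close> zero_in_Q by auto
  ultimately have "c * d' = d * h ^ l"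
    using x power_h_nonzero by (simp add: eq_fract)
  then have "c * d' \<in> Q"
    using \<open>d \<in> Q\<close> mult_in_Q' by metis
  then have "c \<in> Q"
    using \<open>d' \<notin> Q\<close> prime_Q_mult by blast
  then show ?thesis
    using x unfolding locQ_h_def by blast
qed

lemma mult_notin_QCQ:
  assumes "x \<in> Ch" "y \<in> Ch" "x \<notin> QCQ" "y \<notin> QCQ"
  shows "x * y \<notin> QCQ"
proof
  assume "x * y \<in> QCQ"
  obtain c l c' l' where x: "x = Fract c (h ^ l)" and y: "y = Fract c' (h ^ l')"
    using assms(1,2) unfolding loc_h_def by blast
  have "c \<notin> Q" "c' \<notin> Q"
    using assms(3,4) x y Qh_subset_QCQ unfolding locQ_h_def by blast+
  obtain d d' where "d \<in> Q" "d' \<notin> Q" "x * y = Fract d d'"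
    using \<open>x * y \<in> QCQ\<close> unfolding coeffQ_def by blast
  moreover have "d' \<noteq> 0"
    using \<open>d' \<notin> Q\<close> zero_in_Q by auto
  moreover have "x * y = Fract (c * c') (h ^ (l + l'))"
    using x y by (simp add: power_add)
  ultimately have "c * c' * d' = d * h ^ (l + l')"
    using power_h_nonzero by (simp add: eq_fract)
  then have "c * c' * d' \<in> Q"
    using \<open>d \<in> Q\<close> mult_in_Q' by metis
  then show False
    using \<open>c \<notin> Q\<close> \<open>c' \<notin> Q\<close> \<open>d' \<notin> Q\<close> prime_Q_mult by blast
qed

end

section \<open>Coefficients and the product formula\<close>

definition coeff :: "('n, 'f) dop \<Rightarrow> 'n mexp \<Rightarrow> 'f" where
  "coeff P = (\<lambda>(a, b, k). P a b k)"

lemma coeff_simp [simp]: "coeff P (a, b, k) = P a b k"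
  by (simp add: coeff_def)

definition deg_bounded :: "('n::finite, 'f::zero) dop \<Rightarrow> nat \<Rightarrow> bool" where
  "deg_bounded P D \<longleftrightarrow> (\<forall>e. coeff P e \<noteq> 0 \<longrightarrow> mexp_deg e \<le> D)"

lemma deg_boundedD: "deg_bounded P D \<Longrightarrow> coeff P e \<noteq> 0 \<Longrightarrow> mexp_deg e \<le> D"
  unfolding deg_bounded_def by blast

lemma finite_funs_le: "finite {f :: 'n::finite \<Rightarrow> nat. \<forall>i. f i \<le> c i}"
proof -
  have "{f :: 'n \<Rightarrow> nat. \<forall>i. f i \<le> c i} = Pi\<^sub>E UNIV (\<lambda>i. {..c i})"
    by (auto simp: PiE_UNIV_domain Pi_def)
  then show ?thesis
    by (simp add: finite_PiE)
qed

lemma wf_dop_iff_deg_bounded: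
  fixes P :: "('n::finite, 'f::zero) dop"
  shows "wf_dop P \<longleftrightarrow> (\<exists>D. deg_bounded P D)"
proof
  define S where "S = {(b, k). \<exists>a. P a b k \<noteq> 0}"
  assume "wf_dop P"
  then have "finite S"
    by (simp add: wf_dop_def S_def)
  have "deg_bounded P (Max ((\<lambda>(b, k). (\<Sum>i\<in>UNIV. b i) + k) ` S))"
    unfolding deg_bounded_def
  proof (intro allI impI)
    fix e assume "coeff P e \<noteq> 0"
    moreover obtain a b k where "e = (a, b, k)"
      by (cases e)
    ultimately have "(b, k) \<in> S"
      by (auto simp: S_def)
    then show "mexp_deg e \<le> Max ((\<lambda>(b, k). (\<Sum>i\<in>UNIV. b i) + k) ` S)"
      using \<open>e = (a, b, k)\<close> \<open>finite S\<close> by (auto intro!: Max_ge)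
  qed
  then show "\<exists>D. deg_bounded P D" ..
next
  assume "\<exists>D. deg_bounded P D"
  then obtain D where D: "deg_bounded P D" ..
  have "{(b, k). \<exists>a. P a b k \<noteq> 0} \<subseteq> {b. \<forall>i. b i \<le> D} \<times> {..D}"
  proof
    fix x assume "x \<in> {(b, k). \<exists>a. P a b k \<noteq> 0}"
    then obtain a b k where x: "x = (b, k)" "P a b k \<noteq> 0"
      by blast
    then have "(\<Sum>i\<in>UNIV. b i) + k \<le> D"
      using deg_boundedD[OF D, of "(a, b, k)"] by simp
    moreover have "b i \<le> (\<Sum>i\<in>UNIV. b i)" for i
      by (rule member_le_sum) simp_all
    ultimately have "(\<forall>i. b i \<le> D) \<and> k \<le> D"
      by (metis add_leD1 add_leD2 order.trans)
    then show "x \<in> {b. \<forall>i. b i \<le> D} \<times> {..D}"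
      using x by simp
  qed
  moreover have "finite ({b :: 'n \<Rightarrow> nat. \<forall>i. b i \<le> D} \<times> {..D})"
    using finite_funs_le[of "\<lambda>_. D"] by (rule finite_cartesian_product) simp
  ultimately show "wf_dop P"
    unfolding wf_dop_def by (rule finite_subset)
qed

lemma deg_bounded_mono: "deg_bounded P D \<Longrightarrow> D \<le> D' \<Longrightarrow> deg_bounded P D'"
  unfolding deg_bounded_def by force

lemma coeff_dminus: "coeff (dminus P P') e = coeff P e - coeff P' e"
  by (cases e) (simp add: dminus_def)

lemma coeff_sum: "coeff (\<lambda>a b k. \<Sum>j<r. F j a b k) e = (\<Sum>j<r. coeff (F j) e)"
  by (cases e) simp

lemma deg_bounded_dminus:
  fixes P P' :: "('n::finite, 'f::ab_group_add) dop"
  assumes "deg_bounded P D" and "deg_bounded P' D"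
  shows "deg_bounded (dminus P P') D"
  unfolding deg_bounded_def coeff_dminus
proof (intro allI impI)
  fix e assume "coeff P e - coeff P' e \<noteq> 0"
  then have "coeff P e \<noteq> 0 \<or> coeff P' e \<noteq> 0"
    by auto
  then show "mexp_deg e \<le> D"
    using assms deg_boundedD by blast
qed

lemma deg_bounded_sum:
  assumes "\<And>j. j < r \<Longrightarrow> deg_bounded (F j) D"
  shows "deg_bounded (\<lambda>a b k. \<Sum>j<r. F j a b k) D"
  unfolding deg_bounded_def coeff_sum
proof (intro allI impI)
  fix e assume "(\<Sum>j<r. coeff (F j) e) \<noteq> 0"
  then obtain j where "j < r" "coeff (F j) e \<noteq> 0"
    using sum.not_neutral_contains_not_neutral by blast
  then show "mexp_deg e \<le> D"
    using assms deg_boundedD by blast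
qed

lemma deg_bounded_uniform:
  fixes r :: nat
  assumes "\<And>j. j < r \<Longrightarrow> \<exists>D. deg_bounded (F j) D"
  obtains D where "\<And>j. j < r \<Longrightarrow> deg_bounded (F j) D"
proof -
  define Dj where "Dj j = (SOME D. deg_bounded (F j) D)" for j
  have Dj: "deg_bounded (F j) (Dj j)" if "j < r" for j
    unfolding Dj_def using assms[OF that] by (rule someI_ex)
  have "deg_bounded (F j) (\<Sum>j<r. Dj j)" if "j < r" for j
  proof (rule deg_bounded_mono[OF Dj[OF that]])
    show "Dj j \<le> (\<Sum>j<r. Dj j)"
      by (rule member_le_sum) (use that in auto)
  qed
  then show ?thesis using that by blast
qed

lemma coeff_dzero [simp]: "coeff dzero e = 0"
  by (cases e) (simp add: dzero_def)

lemma coeff_dadd: "coeff (dadd P P') e = coeff P e + coeff P' e"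
  by (cases e) (simp add: dadd_def)

lemma dop_eq_iff_coeff: "P = P' \<longleftrightarrow> (\<forall>e. coeff P e = coeff P' e)"
  by (auto simp: fun_eq_iff dest: spec[of _ "(a, b, k)" for a b k])
lemma supp_iff_coeff: "e \<in> supp P \<longleftrightarrow> coeff P e \<noteq> 0"
  by (cases e) (simp add: supp_def)

lemma dzero_iff_coeff: "P = dzero \<longleftrightarrow> (\<forall>e. coeff P e = 0)"
  by (auto simp: dzero_def fun_eq_iff)

lemma dop_over_wf: "P \<in> dop_over A \<Longrightarrow> wf_dop P"
  by (simp add: dop_over_def)

lemma dop_over_coeff: "P \<in> dop_over A \<Longrightarrow> coeff P e \<in> A"
  by (cases e) (simp add: dop_over_def)

lemma dop_overI: "wf_dop P \<Longrightarrow> (\<And>e. coeff P e \<in> A) \<Longrightarrow> P \<in> dop_over A"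
  by (auto simp: dop_over_def dest: spec[of _ "(a, b, k)" for a b k])

lemma wf_dop_dminus:
  fixes P P' :: "('n::finite, 'f::ab_group_add) dop"
  assumes "wf_dop P" and "wf_dop P'"
  shows "wf_dop (dminus P P')"
proof -
  obtain D D' where "deg_bounded P D" "deg_bounded P' D'"
    using assms wf_dop_iff_deg_bounded by blast
  then have "deg_bounded (dminus P P') (D + D')"
    by (intro deg_bounded_dminus) (auto elim: deg_bounded_mono)
  then show ?thesis
    using wf_dop_iff_deg_bounded by blast
qed

lemma dop_over_dminus:
  fixes P P' :: "('n::finite, 'f::ab_group_add) dop"
  assumes "P \<in> dop_over A" "P' \<in> dop_over A" and "\<And>x y. x \<in> A \<Longrightarrow> y \<in> A \<Longrightarrow> x - y \<in> A"
  shows "dminus P P' \<in> dop_over A"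
proof (rule dop_overI)
  show "wf_dop (dminus P P')"
    using wf_dop_dminus[OF dop_over_wf[OF assms(1)] dop_over_wf[OF assms(2)]] .
  show "coeff (dminus P P') e \<in> A" for e
    unfolding coeff_dminus using assms(1,2) by (intro assms(3) dop_over_coeff)
qed

text \<open>An index \<open>(\<alpha>, \<beta>, k, \<gamma>, \<delta>, l, \<mu>)\<close> of the sum defining \<^const>\<open>dmult\<close>: the product
  \<open>x\<^sup>\<alpha>\<partial>\<^sup>\<beta>z\<^sup>k \<cdot> x\<^sup>\<gamma>\<partial>\<^sup>\<delta>z\<^sup>l\<close> contributes to the exponent \<open>(\<alpha> + \<gamma> - \<mu>, \<beta> - \<mu> + \<delta>, k + l + |\<mu>|)\<close>.\<close>

type_synonym 'n mult_index =
  "('n \<Rightarrow> nat) \<times> ('n \<Rightarrow> nat) \<times> nat \<times> ('n \<Rightarrow> nat) \<times> ('n \<Rightarrow> nat) \<times> nat \<times> ('n \<Rightarrow> nat)"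

definition left_exp :: "'n mult_index \<Rightarrow> 'n mexp" where
  "left_exp = (\<lambda>(al, be, k, ga, de, l, mu). (al, be, k))"

definition right_exp :: "'n mult_index \<Rightarrow> 'n mexp" where
  "right_exp = (\<lambda>(al, be, k, ga, de, l, mu). (ga, de, l))"

definition contraction :: "'n mult_index \<Rightarrow> 'n \<Rightarrow> nat" where
  "contraction = (\<lambda>(al, be, k, ga, de, l, mu). mu)"

definition mult_coeff :: "'n::finite mult_index \<Rightarrow> nat" where
  "mult_coeff = (\<lambda>(al, be, k, ga, de, l, mu).
     \<Prod>i\<in>UNIV. (be i choose mu i) * (fact (ga i) div fact (ga i - mu i)))"

definition contributes :: "'n::finite mexp \<Rightarrow> 'n mult_index \<Rightarrow> bool" where
  "contributes = (\<lambda>(a, b, m) (al, be, k, ga, de, l, mu).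
     (\<forall>i. mu i \<le> be i \<and> mu i \<le> ga i \<and> al i + (ga i - mu i) = a i \<and> be i - mu i + de i = b i) \<and>
     k + l + (\<Sum>i\<in>UNIV. mu i) = m)"

definition mult_indices :: "'n::finite mexp \<Rightarrow> nat \<Rightarrow> 'n mult_index set" where
  "mult_indices e D = {t. contributes e t \<and> mexp_deg (left_exp t) \<le> D}"

definition plain_index :: "'n mexp \<Rightarrow> 'n mexp \<Rightarrow> 'n mult_index" where
  "plain_index f f' = (case f of (al, be, k) \<Rightarrow> case f' of (ga, de, l) \<Rightarrow> (al, be, k, ga, de, l, 0))"

lemma plain_index_simps [simp]:
  "left_exp (plain_index f f') = f" "right_exp (plain_index f f') = f'"
  "contraction (plain_index f f') = 0" "mult_coeff (plain_index f f') = 1"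
  by (cases f; cases f'; simp add: plain_index_def left_exp_def right_exp_def contraction_def
      mult_coeff_def zero_fun_def)+

lemma plain_index_eq: "contraction t = 0 \<Longrightarrow> t = plain_index (left_exp t) (right_exp t)"
  by (cases t) (simp add: plain_index_def left_exp_def right_exp_def contraction_def)

lemma contributes_plain_index: "contributes (f + f') (plain_index f f')"
  by (cases f; cases f') (simp add: contributes_def plain_index_def)

lemma contributes_contraction_0:
  "contributes e t \<Longrightarrow> contraction t = 0 \<Longrightarrow> e = left_exp t + right_exp t"
  by (cases e; cases t) (simp add: contributes_def contraction_def left_exp_def right_exp_def fun_eq_iff)

lemma mexp_deg_contributes:
  assumes "contributes e t"
  shows "mexp_deg e = mexp_deg (left_exp t) + mexp_deg (right_exp t)"
proof -
  obtain a b m al be k ga de l mu where e: "e = (a, b, m)" and t: "t = (al, be, k, ga, de, l, mu)"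
    by (cases e; cases t)
  have s: "\<forall>i. mu i \<le> be i \<and> mu i \<le> ga i \<and> al i + (ga i - mu i) = a i \<and> be i - mu i + de i = b i"
    "k + l + (\<Sum>i\<in>UNIV. mu i) = m"
    using assms by (simp_all add: e t contributes_def)
  have "(\<Sum>i\<in>UNIV. b i) = (\<Sum>i\<in>UNIV. be i - mu i) + (\<Sum>i\<in>UNIV. de i)"
    using s by (simp add: sum.distrib[symmetric])
  also have "(\<Sum>i\<in>UNIV. be i - mu i) = (\<Sum>i\<in>UNIV. be i) - (\<Sum>i\<in>UNIV. mu i)"
    using s by (intro sum_subtractf_nat) auto
  finally have "(\<Sum>i\<in>UNIV. b i) = (\<Sum>i\<in>UNIV. be i) - (\<Sum>i\<in>UNIV. mu i) + (\<Sum>i\<in>UNIV. de i)" .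
  moreover have "(\<Sum>i\<in>UNIV. mu i) \<le> (\<Sum>i\<in>UNIV. be i)"
    using s by (intro sum_mono) auto
  ultimately show ?thesis
    using s by (simp add: e t left_exp_def right_exp_def)
qed

lemma finite_mult_indices:
  fixes e :: "'n::finite mexp"
  shows "finite (mult_indices e D)"
proof -
  obtain a b m where e: "e = (a, b, m)"
    by (cases e)
  define F where "F = (\<lambda>(al, be, k, mu).
      (al, be, k, a - al + mu, \<lambda>i. b i - (be i - mu i), m - k - (\<Sum>i\<in>UNIV. mu i), mu))"
  define A where "A = {al. \<forall>i. al i \<le> a i} \<times> {be :: 'n \<Rightarrow> nat. \<forall>i. be i \<le> D} \<times> {..D} \<times>
    {mu :: 'n \<Rightarrow> nat. \<forall>i. mu i \<le> D}"
  have "finite A"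
    unfolding A_def using finite_funs_le[of a] finite_funs_le[of "\<lambda>_. D"]
    by (intro finite_cartesian_product) auto
  moreover have "mult_indices e D \<subseteq> F ` A"
  proof
    fix t assume "t \<in> mult_indices e D"
    moreover obtain al be k ga de l mu where t: "t = (al, be, k, ga, de, l, mu)"
      by (cases t)
    ultimately have s: "\<forall>i. mu i \<le> be i \<and> mu i \<le> ga i \<and> al i + (ga i - mu i) = a i \<and> be i - mu i + de i = b i"
      "k + l + (\<Sum>i\<in>UNIV. mu i) = m" and d: "(\<Sum>i\<in>UNIV. be i) + k \<le> D"
      by (simp_all add: mult_indices_def contributes_def left_exp_def e)
    have be: "be i \<le> D" for i
      using d member_le_sum[of i UNIV be] by simp
    have "ga i = a i - al i + mu i" "de i = b i - (be i - mu i)" "al i \<le> a i" "mu i \<le> D" for i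
      using spec[OF s(1), of i] be[of i] by arith+
    then have "t = F (al, be, k, mu)"
      using s(2) by (simp add: t F_def fun_eq_iff)
    moreover have "(al, be, k, mu) \<in> A"
      using \<open>\<And>i. al i \<le> a i\<close> \<open>\<And>i. mu i \<le> D\<close> be d by (simp add: A_def)
    ultimately show "t \<in> F ` A"
      by blast
  qed
  ultimately show ?thesis
    by (rule finite_surj)
qed

lemma coeff_dmult:
  assumes "deg_bounded P D"
  shows "coeff (dmult P P') e = (\<Sum>t\<in>mult_indices e D.
    coeff P (left_exp t) * coeff P' (right_exp t) * of_nat (mult_coeff t))"
proof -
  obtain a b m where e: "e = (a, b, m)"
    by (cases e)
  let ?term = "\<lambda>t. coeff P (left_exp t) * coeff P' (right_exp t) * of_nat (mult_coeff t)"
  let ?S = "{t. contributes e t \<and> coeff P (left_exp t) \<noteq> 0 \<and> coeff P' (right_exp t) \<noteq> 0}"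
  have "coeff (dmult P P') e = sum ?term ?S"
    unfolding e coeff_simp dmult_def
    by (rule sum.cong) (auto simp: contributes_def left_exp_def right_exp_def mult_coeff_def)
  also have "\<dots> = sum ?term (mult_indices e D)"
  proof (rule sum.mono_neutral_left[OF finite_mult_indices])
    show "?S \<subseteq> mult_indices e D"
      by (auto simp: mult_indices_def intro: deg_boundedD[OF assms])
  qed (auto simp: mult_indices_def)
  finally show ?thesis .
qed

lemma deg_bounded_dmult:
  assumes "deg_bounded P D" and "deg_bounded P' D'"
  shows "deg_bounded (dmult P P') (D + D')"
  unfolding deg_bounded_def
proof (intro allI impI)
  fix e assume "coeff (dmult P P') e \<noteq> 0"
  then obtain t where t: "t \<in> mult_indices e D"
    and "coeff P (left_exp t) * coeff P' (right_exp t) * of_nat (mult_coeff t) \<noteq> 0"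
    unfolding coeff_dmult[OF assms(1)] using sum.not_neutral_contains_not_neutral by blast
  then have "mexp_deg (left_exp t) \<le> D" "mexp_deg (right_exp t) \<le> D'"
    using deg_boundedD[OF assms(1)] deg_boundedD[OF assms(2)] by simp_all
  then show "mexp_deg e \<le> D + D'"
    using t mexp_deg_contributes[of e t] by (simp add: mult_indices_def)
qed

lemma coeff_dmult_dminus_left:
  fixes P P' :: "('n::finite, 'f::field) dop"
  assumes "wf_dop P" and "wf_dop P'"
  shows "coeff (dmult (dminus P P') P'') e = coeff (dmult P P'') e - coeff (dmult P' P'') e"
proof -
  obtain D D' where "deg_bounded P D" "deg_bounded P' D'"
    using assms wf_dop_iff_deg_bounded by blast
  then have bounded: "deg_bounded P (D + D')" "deg_bounded P' (D + D')"
    using deg_bounded_mono le_add1 le_add2 by blast+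
  show ?thesis
    unfolding coeff_dmult[OF deg_bounded_dminus[OF bounded]] coeff_dmult[OF bounded(1)]
      coeff_dmult[OF bounded(2)]
    by (simp only: coeff_dminus left_diff_distrib sum_subtractf)
qed

context admissible_order
begin

lemma contributes_contraction_less:
  assumes "contributes e t" and "contraction t \<noteq> 0"
  shows "e \<prec>\<^sub>h left_exp t + right_exp t"
proof -
  obtain a b m al be k ga de l mu where e: "e = (a, b, m)" and t: "t = (al, be, k, ga, de, l, mu)"
    by (cases e; cases t)
  have "mu i + a i = al i + ga i" "mu i + b i = be i + de i" for i
    using assms(1) by (auto simp: e t contributes_def dest: spec[of _ i])
  then have "(mu + a, mu + b) = (al + ga, be + de)"
    by (simp add: fun_eq_iff)
  moreover have "ord (0 + a, 0 + b) (mu + a, mu + b)"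
    using ord_add_right[OF ord_one_less_x_xi] assms(2) by (simp add: t contraction_def)
  ultimately have "ord (a, b) (al + ga, be + de)"
    by simp
  then show ?thesis
    using mexp_deg_contributes[OF assms(1)]
    by (simp add: less_h_iff e t left_exp_def right_exp_def sum.distrib)
qed

end

section \<open>Division modulo \<open>Q\<close>\<close>

lemma lc_modQ_eq_coeff: "lc_modQ ord Q P = coeff P (exp_modQ ord Q P)"
  by (cases "exp_modQ ord Q P") (simp add: lc_modQ_def)

locale division_setting = admissible_order ord + prime_localization Q h
  for ord :: "('n::finite \<Rightarrow> nat) \<times> ('n \<Rightarrow> nat) \<Rightarrow> ('n \<Rightarrow> nat) \<times> ('n \<Rightarrow> nat) \<Rightarrow> bool"
    and Q :: "'c::idom set" and h :: 'c +
  fixes r :: nat and g :: "nat \<Rightarrow> ('n, 'c fract) dop"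
  assumes g_in: "\<forall>j<r. g j \<in> dop_over (loc_h h) - dop_over (locQ_h Q h)"
    and g_lc: "\<forall>j<r. lc_num_dvd Q (lc_modQ ord Q (g j)) h"
begin

lemma exp_modQ_greatest:
  assumes "P \<in> dop_over Ch - dop_over Qh"
  shows "coeff P (exp_modQ ord Q P) \<notin> QCQ"
    and "coeff P e \<notin> QCQ \<Longrightarrow> e \<noteq> exp_modQ ord Q P \<Longrightarrow> e \<prec>\<^sub>h exp_modQ ord Q P"
proof -
  define S where "S = {(a, b, k). P a b k \<notin> QCQ}"
  have mem_S: "e \<in> S \<longleftrightarrow> coeff P e \<notin> QCQ" for e
    by (cases e) (simp add: S_def)
  have "P \<in> dop_over Ch" "wf_dop P" "P \<notin> dop_over Qh"
    using assms dop_over_wf by auto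
  then obtain D where D: "deg_bounded P D"
    using wf_dop_iff_deg_bounded by blast
  obtain e0 where "coeff P e0 \<notin> Qh"
    using \<open>wf_dop P\<close> \<open>P \<notin> dop_over Qh\<close> dop_overI by blast
  then have "e0 \<in> S"
    using \<open>P \<in> dop_over Ch\<close> dop_over_coeff Ch_QCQ_imp_Qh mem_S by blast
  moreover have "\<forall>e\<in>S. mexp_deg e \<le> D"
    using D mem_S nonzero_if_notin_QCQ deg_boundedD by blast
  ultimately obtain emax where emax: "emax \<in> S" "\<forall>e'\<in>S. e' \<noteq> emax \<longrightarrow> e' \<prec>\<^sub>h emax"
    using bounded_has_greatest by blast
  have "exp_modQ ord Q P = emax"
    unfolding exp_modQ_def S_def[symmetric]
  proof (rule the_equality)
    show "emax \<in> S \<and> (\<forall>e'\<in>S. e' \<noteq> emax \<longrightarrow> e' \<prec>\<^sub>h emax)"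
      using emax by blast
  next
    fix e assume e: "e \<in> S \<and> (\<forall>e'\<in>S. e' \<noteq> e \<longrightarrow> e' \<prec>\<^sub>h e)"
    show "e = emax"
    proof (rule ccontr)
      assume "e \<noteq> emax"
      then have "e \<prec>\<^sub>h emax" "emax \<prec>\<^sub>h e"
        using e emax by auto
      then show False
        using less_h_asym by blast
    qed
  qed
  then show "coeff P (exp_modQ ord Q P) \<notin> QCQ"
    and "coeff P e \<notin> QCQ \<Longrightarrow> e \<noteq> exp_modQ ord Q P \<Longrightarrow> e \<prec>\<^sub>h exp_modQ ord Q P"
    using emax mem_S by auto
qed

abbreviation lexp :: "nat \<Rightarrow> 'n mexp" where
  "lexp \<equiv> \<lambda>j. exp_modQ ord Q (g j)"

abbreviation lc :: "nat \<Rightarrow> 'c fract" where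
  "lc j \<equiv> lc_modQ ord Q (g j)"

lemma g_coeff_in_Ch: "j < r \<Longrightarrow> coeff (g j) e \<in> Ch"
  using g_in dop_over_coeff by blast

lemma g_deg_bounded: "j < r \<Longrightarrow> \<exists>D. deg_bounded (g j) D"
  using g_in dop_over_wf wf_dop_iff_deg_bounded by blast

lemma lc_notin_QCQ: "j < r \<Longrightarrow> lc j \<notin> QCQ"
  using exp_modQ_greatest(1) g_in by (simp add: lc_modQ_eq_coeff)

lemma lc_in_Ch: "j < r \<Longrightarrow> lc j \<in> Ch"
  using g_coeff_in_Ch by (simp add: lc_modQ_eq_coeff)

lemma inverse_lc_in_Ch: "j < r \<Longrightarrow> inverse (lc j) \<in> Ch"
  using g_lc inverse_in_Ch by blast

lemma lc_nonzero: "j < r \<Longrightarrow> lc j \<noteq> 0"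
  using lc_notin_QCQ nonzero_if_notin_QCQ by blast

lemma contributes_modQ_cases:
  assumes "j < r" and "contributes e t" and "coeff (g j) (right_exp t) \<notin> QCQ"
  shows "t = plain_index (left_exp t) (lexp j) \<or> e \<prec>\<^sub>h left_exp t + lexp j"
proof (cases "right_exp t = lexp j")
  case True
  show ?thesis
  proof (cases "contraction t = 0")
    case True
    then show ?thesis using \<open>right_exp t = lexp j\<close> plain_index_eq by metis
  next
    case False
    then show ?thesis using \<open>right_exp t = lexp j\<close> contributes_contraction_less assms(2) by metis
  qed
next
  case False
  then have "left_exp t + right_exp t \<prec>\<^sub>h left_exp t + lexp j"
    using exp_modQ_greatest(2) g_in assms(1,3) less_h_add_left by blast
  moreover have "e = left_exp t + right_exp t \<or> e \<prec>\<^sub>h left_exp t + right_exp t"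
    using contributes_contraction_0 contributes_contraction_less assms(2) by blast
  ultimately show ?thesis
    using less_h_trans by blast
qed

text \<open>The coefficient of \<open>q \<cdot> g\<^sub>j\<close> at \<open>e\<close> splits into the terms whose exponent of \<open>q\<close>,
  shifted by \<open>exp\<^sup>m\<^sup>o\<^sup>d\<^sup>Q(g\<^sub>j)\<close>, lies strictly above \<open>e\<close>; the plain product with the leading
  term; and the rest, which lies in \<open>Q[h\<^sup>-\<^sup>1]\<close>.\<close>

definition mult_term :: "('n, 'c fract) dop \<Rightarrow> nat \<Rightarrow> 'n mult_index \<Rightarrow> 'c fract" where
  "mult_term q j t = coeff q (left_exp t) * coeff (g j) (right_exp t) * of_nat (mult_coeff t)"

definition upper_part :: "nat \<Rightarrow> ('n, 'c fract) dop \<Rightarrow> nat \<Rightarrow> 'n mexp \<Rightarrow> 'c fract" where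
  "upper_part D q j e =
     (\<Sum>t\<in>mult_indices e D. if e \<prec>\<^sub>h left_exp t + lexp j then mult_term q j t else 0)"

definition leading_part :: "nat \<Rightarrow> ('n, 'c fract) dop \<Rightarrow> nat \<Rightarrow> 'n mexp \<Rightarrow> 'c fract" where
  "leading_part D q j e =
     (\<Sum>t\<in>mult_indices e D. if t = plain_index (left_exp t) (lexp j) then mult_term q j t else 0)"

definition lower_part :: "nat \<Rightarrow> ('n, 'c fract) dop \<Rightarrow> nat \<Rightarrow> 'n mexp \<Rightarrow> 'c fract" where
  "lower_part D q j e =
     (\<Sum>t\<in>mult_indices e D. if e \<prec>\<^sub>h left_exp t + lexp j \<or> t = plain_index (left_exp t) (lexp j)
        then 0 else mult_term q j t)"

lemma plain_index_lexp_target: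
  assumes "contributes e t" and "t = plain_index (left_exp t) (lexp j)"
  shows "e = left_exp t + lexp j"
proof -
  have "contraction t = 0" "right_exp t = lexp j"
    using arg_cong[OF assms(2), of contraction] arg_cong[OF assms(2), of right_exp] by simp_all
  then show ?thesis
    using contributes_contraction_0[OF assms(1)] by simp
qed

lemma coeff_dmult_split:
  assumes "deg_bounded q D"
  shows "coeff (dmult q (g j)) e = upper_part D q j e + leading_part D q j e + lower_part D q j e"
proof -
  have exclusive: "\<not> (e \<prec>\<^sub>h left_exp t + lexp j \<and> t = plain_index (left_exp t) (lexp j))"
    if "t \<in> mult_indices e D" for t
  proof
    assume *: "e \<prec>\<^sub>h left_exp t + lexp j \<and> t = plain_index (left_exp t) (lexp j)"
    moreover have "contributes e t"
      using that by (simp add: mult_indices_def)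
    ultimately have "e = left_exp t + lexp j"
      using plain_index_lexp_target by blast
    with * show False
      using less_h_irrefl by simp
  qed
  have "coeff (dmult q (g j)) e = (\<Sum>t\<in>mult_indices e D. mult_term q j t)"
    unfolding coeff_dmult[OF assms] mult_term_def ..
  also have "\<dots> = (\<Sum>t\<in>mult_indices e D.
      (if e \<prec>\<^sub>h left_exp t + lexp j then mult_term q j t else 0) +
      (if t = plain_index (left_exp t) (lexp j) then mult_term q j t else 0) +
      (if e \<prec>\<^sub>h left_exp t + lexp j \<or> t = plain_index (left_exp t) (lexp j) then 0 else mult_term q j t))"
    by (intro sum.cong refl) (use exclusive in auto)
  also have "\<dots> = upper_part D q j e + leading_part D q j e + lower_part D q j e"
    by (simp only: sum.distrib upper_part_def leading_part_def lower_part_def)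
  finally show ?thesis .
qed

lemma leading_part_eq:
  assumes "deg_bounded q D"
  shows "leading_part D q j (f + lexp j) = coeff q f * lc j"
proof -
  let ?t0 = "plain_index f (lexp j)"
  have "t = plain_index (left_exp t) (lexp j) \<longleftrightarrow> t = ?t0"
    if "t \<in> mult_indices (f + lexp j) D" for t
  proof
    assume t: "t = plain_index (left_exp t) (lexp j)"
    have "contributes (f + lexp j) t"
      using that by (simp add: mult_indices_def)
    then have "f + lexp j = left_exp t + lexp j"
      using t by (rule plain_index_lexp_target)
    then show "t = ?t0"
      using t by simp
  qed simp
  then have "leading_part D q j (f + lexp j) =
      (\<Sum>t\<in>mult_indices (f + lexp j) D. if t = ?t0 then mult_term q j t else 0)"
    unfolding leading_part_def by (intro sum.cong refl) simp
  also have "\<dots> = (if ?t0 \<in> mult_indices (f + lexp j) D then mult_term q j ?t0 else 0)"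
    by (rule sum.delta[OF finite_mult_indices])
  also have "\<dots> = coeff q f * lc j"
  proof (cases "mexp_deg f \<le> D")
    case True
    then show ?thesis
      by (simp add: mult_indices_def contributes_plain_index mult_term_def lc_modQ_eq_coeff)
  next
    case False
    then show ?thesis
      using deg_boundedD[OF assms, of f] by (auto simp: mult_indices_def)
  qed
  finally show ?thesis .
qed

lemma leading_part_eq_0:
  assumes "\<And>f. e \<noteq> f + lexp j"
  shows "leading_part D q j e = 0"
  unfolding leading_part_def
proof (rule sum.neutral, rule ballI)
  fix t assume "t \<in> mult_indices e D"
  then have "contributes e t"
    by (simp add: mult_indices_def)
  then have "t \<noteq> plain_index (left_exp t) (lexp j)"
    using plain_index_lexp_target assms by blast
  then show "(if t = plain_index (left_exp t) (lexp j) then mult_term q j t else 0) = 0"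
    by simp
qed

lemma lower_part_in_Qh:
  assumes "j < r" and "\<And>f. coeff q f \<in> Ch"
  shows "lower_part D q j e \<in> Qh"
  unfolding lower_part_def
proof (rule Qh_sum)
  fix t assume t: "t \<in> mult_indices e D"
  show "(if e \<prec>\<^sub>h left_exp t + lexp j \<or> t = plain_index (left_exp t) (lexp j)
      then 0 else mult_term q j t) \<in> Qh"
  proof (cases "e \<prec>\<^sub>h left_exp t + lexp j \<or> t = plain_index (left_exp t) (lexp j)")
    case True
    then show ?thesis using Qh_0 by simp
  next
    case False
    moreover have "contributes e t"
      using t by (simp add: mult_indices_def)
    ultimately have "coeff (g j) (right_exp t) \<in> QCQ"
      using contributes_modQ_cases[OF assms(1)] by blast
    then have "coeff (g j) (right_exp t) \<in> Qh"
      using Ch_QCQ_imp_Qh g_coeff_in_Ch[OF assms(1)] by blast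
    then have "mult_term q j t \<in> Qh"
      unfolding mult_term_def by (rule Qh_mult_right[OF Qh_mult_left[OF assms(2)] Ch_of_nat])
    with False show ?thesis
      by simp
  qed
qed

lemma upper_part_in_Ch:
  assumes "j < r"
    and "\<And>t. t \<in> mult_indices e D \<Longrightarrow> e \<prec>\<^sub>h left_exp t + lexp j \<Longrightarrow> coeff q (left_exp t) \<in> Ch"
  shows "upper_part D q j e \<in> Ch"
  unfolding upper_part_def mult_term_def
  using assms Ch_0 Ch_mult g_coeff_in_Ch Ch_of_nat by (intro Ch_sum) auto

lemma upper_part_in_Qh:
  assumes "j < r"
    and "\<And>t. t \<in> mult_indices e D \<Longrightarrow> e \<prec>\<^sub>h left_exp t + lexp j \<Longrightarrow> coeff q (left_exp t) \<in> Qh"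
  shows "upper_part D q j e \<in> Qh"
  unfolding upper_part_def mult_term_def
  using assms Qh_0 Qh_mult_right g_coeff_in_Ch Ch_of_nat by (intro Qh_sum) auto

lemma upper_part_cong:
  assumes "\<And>t. t \<in> mult_indices e D \<Longrightarrow> e \<prec>\<^sub>h left_exp t + lexp j \<Longrightarrow>
    coeff q (left_exp t) = coeff q' (left_exp t)"
  shows "upper_part D q j e = upper_part D q' j e"
  unfolding upper_part_def mult_term_def using assms by (intro sum.cong) auto

lemma division_rep_iff:
  "division_rep ord Q h r g P q R T \<longleftrightarrow>
     (\<forall>j<r. q j \<in> dop_over Ch) \<and> R \<in> dop_over Ch \<and> T \<in> dop_over Qh \<and>
     (\<forall>e. coeff P e = (\<Sum>j<r. coeff (dmult (q j) (g j)) e) + coeff R e + coeff T e) \<and>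
     (\<forall>j<r. \<forall>f. coeff (q j) f \<noteq> 0 \<longrightarrow> f + lexp j \<in> Delta lexp j) \<and>
     (\<forall>e. coeff R e \<noteq> 0 \<longrightarrow> e \<in> Delta_bar lexp r)"
proof -
  have "P = dadd (dadd (\<lambda>a b k. \<Sum>j<r. dmult (q j) (g j) a b k) R) T \<longleftrightarrow>
      (\<forall>e. coeff P e = (\<Sum>j<r. coeff (dmult (q j) (g j)) e) + coeff R e + coeff T e)"
    by (simp add: dop_eq_iff_coeff coeff_dadd coeff_sum)
  moreover have "(\<forall>j<r. q j \<noteq> dzero \<longrightarrow> (\<forall>f\<in>supp (q j). mexp_add f (lexp j) \<in> Delta lexp j)) \<longleftrightarrow>
      (\<forall>j<r. \<forall>f. coeff (q j) f \<noteq> 0 \<longrightarrow> f + lexp j \<in> Delta lexp j)"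
    by (auto simp: supp_iff_coeff dzero_iff_coeff mexp_add_eq_plus)
  moreover have "(R \<noteq> dzero \<longrightarrow> supp R \<subseteq> Delta_bar lexp r) \<longleftrightarrow>
      (\<forall>e. coeff R e \<noteq> 0 \<longrightarrow> e \<in> Delta_bar lexp r)"
    by (auto simp: supp_iff_coeff dzero_iff_coeff)
  moreover have "P' \<in> dop_over A \<Longrightarrow> P' \<in> dop_over UNIV" for P' and A :: "'c fract set"
    by (simp add: dop_over_def)
  ultimately show ?thesis
    unfolding division_rep_def by (smt (verit))
qed

definition quotient_dop :: "nat \<Rightarrow> ('n mexp \<Rightarrow> 'c fract) \<Rightarrow> nat \<Rightarrow> ('n, 'c fract) dop" where
  "quotient_dop D \<phi> j = (\<lambda>a b k.
     if mexp_deg ((a, b, k) + lexp j) \<le> D \<and> (a, b, k) + lexp j \<in> Delta lexp j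
     then \<phi> ((a, b, k) + lexp j) * inverse (lc j) else 0)"

lemma coeff_quotient_dop:
  "coeff (quotient_dop D \<phi> j) f =
     (if mexp_deg (f + lexp j) \<le> D \<and> f + lexp j \<in> Delta lexp j then \<phi> (f + lexp j) * inverse (lc j) else 0)"
  by (cases f) (simp add: quotient_dop_def)

lemma deg_bounded_quotient_dop: "deg_bounded (quotient_dop D \<phi> j) D"
  unfolding deg_bounded_def coeff_quotient_dop by (auto split: if_splits)

text \<open>The division algorithm, run downwards along \<open>\<prec>\<^sub>h\<close> from degree \<open>D\<close>: the residue at \<open>e\<close> is what
  is left of \<open>P\<close> at \<open>e\<close> after subtracting the quotient terms fixed strictly above \<open>e\<close>. It becomes a
  coefficient of \<open>q\<^sub>j\<close> if \<open>e \<in> \<Delta>\<^sub>j\<close> and of \<open>R\<close> if \<open>e \<in> \<Delta>\<close>-bar.\<close>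

definition residue :: "('n, 'c fract) dop \<Rightarrow> nat \<Rightarrow> 'n mexp \<Rightarrow> 'c fract" where
  "residue P D = wfrec (above_bounded D)
     (\<lambda>\<phi> e. coeff P e - (\<Sum>j<r. upper_part D (quotient_dop D \<phi> j) j e))"

lemma residue_eq:
  "residue P D e = coeff P e - (\<Sum>j<r. upper_part D (quotient_dop D (residue P D) j) j e)"
proof -
  have "adm_wf (above_bounded D) (\<lambda>\<phi> e. coeff P e - (\<Sum>j<r. upper_part D (quotient_dop D \<phi> j) j e))"
    unfolding adm_wf_def
  proof (intro allI impI)
    fix \<phi> \<psi> :: "'n mexp \<Rightarrow> 'c fract" and e
    assume same: "\<forall>e'. (e', e) \<in> above_bounded D \<longrightarrow> \<phi> e' = \<psi> e'"
    have "upper_part D (quotient_dop D \<phi> j) j e = upper_part D (quotient_dop D \<psi> j) j e" for j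
    proof (rule upper_part_cong)
      fix t assume "e \<prec>\<^sub>h left_exp t + lexp j"
      then have "mexp_deg (left_exp t + lexp j) \<le> D \<Longrightarrow>
          \<phi> (left_exp t + lexp j) = \<psi> (left_exp t + lexp j)"
        using same[rule_format, of "left_exp t + lexp j"] by (simp add: above_bounded_def)
      then show "coeff (quotient_dop D \<phi> j) (left_exp t) = coeff (quotient_dop D \<psi> j) (left_exp t)"
        by (simp add: coeff_quotient_dop)
    qed
    then show "coeff P e - (\<Sum>j<r. upper_part D (quotient_dop D \<phi> j) j e) =
        coeff P e - (\<Sum>j<r. upper_part D (quotient_dop D \<psi> j) j e)"
      by simp
  qed
  then show ?thesis
    unfolding residue_def by (subst wfrec_fixpoint[OF wf_above_bounded]) simp_all
qed

lemma residue_in_Ch: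
  assumes "\<And>e. coeff P e \<in> Ch"
  shows "residue P D e \<in> Ch"
proof (induction e rule: wf_induct_rule[OF wf_above_bounded[of D]])
  case (1 e)
  have "upper_part D (quotient_dop D (residue P D) j) j e \<in> Ch" if "j < r" for j
  proof (rule upper_part_in_Ch[OF that])
    fix t assume "e \<prec>\<^sub>h left_exp t + lexp j"
    then show "coeff (quotient_dop D (residue P D) j) (left_exp t) \<in> Ch"
      using 1 Ch_mult[OF _ inverse_lc_in_Ch[OF that]] Ch_0
      by (simp add: coeff_quotient_dop above_bounded_def)
  qed
  then have "(\<Sum>j<r. upper_part D (quotient_dop D (residue P D) j) j e) \<in> Ch"
    by (intro Ch_sum) simp
  then show ?case
    by (subst residue_eq) (rule Ch_diff[OF assms])
qed

lemma residue_eq_0: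
  assumes "deg_bounded P D" and "\<not> mexp_deg e \<le> D"
  shows "residue P D e = 0"
proof -
  have "coeff P e = 0"
    using assms deg_boundedD by blast
  moreover have "upper_part D (quotient_dop D (residue P D) j) j e = upper_part D dzero j e" for j
  proof (rule upper_part_cong)
    fix t assume "e \<prec>\<^sub>h left_exp t + lexp j"
    then have "\<not> mexp_deg (left_exp t + lexp j) \<le> D"
      using assms(2) less_h_imp_deg_le[of e "left_exp t + lexp j"] by linarith
    then show "coeff (quotient_dop D (residue P D) j) (left_exp t) = coeff dzero (left_exp t)"
      by (simp add: coeff_quotient_dop)
  qed
  moreover have "upper_part D dzero j e = 0" for j
    by (simp add: upper_part_def mult_term_def cong: if_cong)
  ultimately show ?thesis
    by (subst residue_eq) simp
qed

definition remainder :: "('n, 'c fract) dop \<Rightarrow> nat \<Rightarrow> ('n, 'c fract) dop" where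
  "remainder P D = (\<lambda>a b k.
     if mexp_deg (a, b, k) \<le> D \<and> (a, b, k) \<in> Delta_bar lexp r then residue P D (a, b, k) else 0)"

lemma coeff_remainder:
  "coeff (remainder P D) e = (if mexp_deg e \<le> D \<and> e \<in> Delta_bar lexp r then residue P D e else 0)"
  by (cases e) (simp add: remainder_def)

lemma deg_bounded_remainder: "deg_bounded (remainder P D) D"
  unfolding deg_bounded_def coeff_remainder by (auto split: if_splits)

lemma quotient_dop_in_Ch:
  assumes "j < r" and "\<And>e. \<phi> e \<in> Ch"
  shows "quotient_dop D \<phi> j \<in> dop_over Ch"
proof (rule dop_overI)
  show "wf_dop (quotient_dop D \<phi> j)"
    using deg_bounded_quotient_dop wf_dop_iff_deg_bounded by blast
  show "coeff (quotient_dop D \<phi> j) f \<in> Ch" for f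
    using assms(2) Ch_mult[OF _ inverse_lc_in_Ch[OF assms(1)]] Ch_0 by (simp add: coeff_quotient_dop)
qed

lemma remainder_in_Ch:
  assumes "\<And>e. coeff P e \<in> Ch"
  shows "remainder P D \<in> dop_over Ch"
proof (rule dop_overI)
  show "wf_dop (remainder P D)"
    using deg_bounded_remainder wf_dop_iff_deg_bounded by blast
  show "coeff (remainder P D) e \<in> Ch" for e
    using residue_in_Ch[OF assms] Ch_0 by (simp add: coeff_remainder)
qed

lemma leading_parts_remainder:
  assumes "deg_bounded P D"
  shows "(\<Sum>j<r. leading_part D (quotient_dop D (residue P D) j) j e) + coeff (remainder P D) e =
    residue P D e"
proof -
  have "leading_part D (quotient_dop D (residue P D) j) j e =
      (if e \<in> Delta lexp j then residue P D e else 0)" if "j < r" for j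
  proof (cases "\<exists>f. e = f + lexp j")
    case True
    then obtain f where f: "e = f + lexp j" ..
    then have "leading_part D (quotient_dop D (residue P D) j) j e =
        coeff (quotient_dop D (residue P D) j) f * lc j"
      using leading_part_eq[OF deg_bounded_quotient_dop] by simp
    also have "\<dots> = (if e \<in> Delta lexp j then residue P D e else 0)"
      using f lc_nonzero[OF that] residue_eq_0[OF assms, of e] by (simp add: coeff_quotient_dop)
    finally show ?thesis .
  next
    case False
    have "e \<notin> Delta lexp j"
    proof
      assume "e \<in> Delta lexp j"
      then obtain f where "e = lexp j + f"
        using Delta_subset_cone cone_iff by blast
      then have "e = f + lexp j"
        by (simp only: add.commute)
      with False show False
        by blast
    qed
    moreover have "leading_part D (quotient_dop D (residue P D) j) j e = 0"
      by (rule leading_part_eq_0) (use False in blast)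
    ultimately show ?thesis
      by simp
  qed
  moreover have "coeff (remainder P D) e = (if e \<in> Delta_bar lexp r then residue P D e else 0)"
    using residue_eq_0[OF assms, of e] by (simp add: coeff_remainder)
  ultimately have "(\<Sum>j<r. leading_part D (quotient_dop D (residue P D) j) j e) + coeff (remainder P D) e =
      (\<Sum>j<r. if e \<in> Delta lexp j then residue P D e else 0) +
      (if e \<in> Delta_bar lexp r then residue P D e else 0)"
    by simp
  then show ?thesis
    by (simp only: Delta_partition_sum)
qed

lemma division_defect_in_Qh:
  assumes "deg_bounded P D" and "\<And>e. coeff P e \<in> Ch"
  shows "coeff P e - (\<Sum>j<r. coeff (dmult (quotient_dop D (residue P D) j) (g j)) e)
    - coeff (remainder P D) e \<in> Qh"
proof -
  let ?q = "\<lambda>j. quotient_dop D (residue P D) j"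
  let ?U = "\<Sum>j<r. upper_part D (?q j) j e"
  let ?L = "\<Sum>j<r. leading_part D (?q j) j e"
  let ?W = "\<Sum>j<r. lower_part D (?q j) j e"
  have "(\<Sum>j<r. coeff (dmult (?q j) (g j)) e) = ?U + ?L + ?W"
    by (simp add: coeff_dmult_split[OF deg_bounded_quotient_dop] sum.distrib)
  then have "coeff P e - (\<Sum>j<r. coeff (dmult (?q j) (g j)) e) - coeff (remainder P D) e =
      (coeff P e - ?U) - (?L + coeff (remainder P D) e) - ?W"
    by (simp add: algebra_simps)
  also have "\<dots> = - ?W"
    using residue_eq[of P D e] leading_parts_remainder[OF assms(1), of e] by simp
  finally have "coeff P e - (\<Sum>j<r. coeff (dmult (?q j) (g j)) e) - coeff (remainder P D) e = - ?W" .
  moreover have "lower_part D (?q j) j e \<in> Qh" if "j < r" for j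
    using that dop_over_coeff[OF quotient_dop_in_Ch[OF that residue_in_Ch[OF assms(2)]]]
    by (rule lower_part_in_Qh)
  then have "?W \<in> Qh"
    by (intro Qh_sum) simp
  ultimately show ?thesis
    using Qh_minus by simp
qed

lemma division_rep_exists:
  assumes "P \<in> dop_over Ch"
  shows "\<exists>q R T. division_rep ord Q h r g P q R T"
proof -
  obtain D where D: "deg_bounded P D"
    using assms dop_over_wf wf_dop_iff_deg_bounded by blast
  have P_Ch: "coeff P e \<in> Ch" for e
    using assms by (rule dop_over_coeff)
  obtain Dg where Dg: "\<And>j. j < r \<Longrightarrow> deg_bounded (g j) Dg"
    using deg_bounded_uniform[where F = g and r = r] g_deg_bounded by metis
  define q where "q j = quotient_dop D (residue P D) j" for j
  define R where "R = remainder P D"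
  define S where "S = (\<lambda>a b k. \<Sum>j<r. dmult (q j) (g j) a b k)"
  define T where "T = dminus (dminus P S) R"
  have coeff_T: "coeff T e = coeff P e - (\<Sum>j<r. coeff (dmult (q j) (g j)) e) - coeff R e" for e
    by (simp add: T_def S_def coeff_dminus coeff_sum)
  have "deg_bounded S (D + Dg)"
    unfolding S_def q_def by (intro deg_bounded_sum deg_bounded_dmult deg_bounded_quotient_dop Dg)
  moreover have "deg_bounded P (D + Dg)" "deg_bounded R (D + Dg)"
    using deg_bounded_mono[OF D] deg_bounded_mono[OF deg_bounded_remainder] by (simp_all add: R_def)
  ultimately have "deg_bounded T (D + Dg)"
    unfolding T_def by (intro deg_bounded_dminus)
  have "T \<in> dop_over Qh"
  proof (rule dop_overI)
    show "wf_dop T"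
      using \<open>deg_bounded T (D + Dg)\<close> wf_dop_iff_deg_bounded by blast
    show "coeff T e \<in> Qh" for e
      using division_defect_in_Qh[OF D P_Ch, of e] by (simp add: coeff_T q_def R_def)
  qed
  moreover have "q j \<in> dop_over Ch" if "j < r" for j
    unfolding q_def using that residue_in_Ch[OF P_Ch] by (rule quotient_dop_in_Ch)
  moreover have "R \<in> dop_over Ch"
    unfolding R_def using P_Ch by (rule remainder_in_Ch)
  moreover have "coeff (q j) f \<noteq> 0 \<Longrightarrow> f + lexp j \<in> Delta lexp j" for j f
    by (simp add: q_def coeff_quotient_dop split: if_splits)
  moreover have "coeff R e \<noteq> 0 \<Longrightarrow> e \<in> Delta_bar lexp r" for e
    by (simp add: R_def coeff_remainder split: if_splits)
  ultimately have "division_rep ord Q h r g P q R T"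
    unfolding division_rep_iff by (simp add: coeff_T)
  then show ?thesis
    by blast
qed

lemma Qh_if_mult_lc_in_Qh:
  assumes "j < r" and "x \<in> Ch" and "x * lc j \<in> Qh"
  shows "x \<in> Qh"
proof (rule ccontr)
  assume "x \<notin> Qh"
  then have "x \<notin> QCQ"
    using assms(2) Ch_QCQ_imp_Qh by blast
  then have "x * lc j \<notin> QCQ"
    using mult_notin_QCQ assms(1,2) lc_in_Ch lc_notin_QCQ by blast
  then show False
    using assms(3) Qh_subset_QCQ by blast
qed

lemma leading_part_eq_0_outside:
  assumes "deg_bounded q D" and "\<And>f. coeff q f \<noteq> 0 \<Longrightarrow> f + lexp j \<in> Delta lexp j"
    and "e \<notin> Delta lexp j"
  shows "leading_part D q j e = 0"
proof (cases "\<exists>f. e = f + lexp j")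
  case True
  then obtain f where "e = f + lexp j" ..
  with assms have "coeff q f = 0"
    by blast
  then show ?thesis
    using leading_part_eq[OF assms(1)] \<open>e = f + lexp j\<close> by simp
next
  case False
  then show ?thesis
    by (intro leading_part_eq_0) blast
qed

lemma leading_parts_in_Qh:
  assumes "\<And>j. j < r \<Longrightarrow> deg_bounded (q j) D" and "\<And>j f. j < r \<Longrightarrow> coeff (q j) f \<in> Ch"
    and "\<And>j f. j < r \<Longrightarrow> e \<prec>\<^sub>h f + lexp j \<Longrightarrow> coeff (q j) f \<in> Qh"
    and "(\<Sum>j<r. coeff (dmult (q j) (g j)) e) + c \<in> Qh"
  shows "(\<Sum>j<r. leading_part D (q j) j e) + c \<in> Qh"
proof -
  let ?U = "\<Sum>j<r. upper_part D (q j) j e"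
  let ?L = "\<Sum>j<r. leading_part D (q j) j e"
  let ?W = "\<Sum>j<r. lower_part D (q j) j e"
  have "(\<Sum>j<r. coeff (dmult (q j) (g j)) e) =
      (\<Sum>j<r. upper_part D (q j) j e + leading_part D (q j) j e + lower_part D (q j) j e)"
    by (rule sum.cong) (simp_all add: coeff_dmult_split assms(1))
  also have "\<dots> = ?U + ?L + ?W"
    by (simp only: sum.distrib)
  finally have "(\<Sum>j<r. coeff (dmult (q j) (g j)) e) = ?U + ?L + ?W" .
  then have eq: "?L + c = ((\<Sum>j<r. coeff (dmult (q j) (g j)) e) + c) - ?U - ?W"
    by (simp add: algebra_simps)
  have "?U \<in> Qh"
    using assms(3) by (intro Qh_sum upper_part_in_Qh) simp_all
  moreover have "?W \<in> Qh"
    using assms(2) by (intro Qh_sum lower_part_in_Qh) simp_all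
  ultimately show ?thesis
    unfolding eq by (intro Qh_diff assms(4))
qed

lemma coeff_in_Qh_at_Delta_bar:
  assumes "e \<in> Delta_bar lexp r" and "\<And>j. j < r \<Longrightarrow> deg_bounded (q j) D"
    and q_supp: "\<And>j f. j < r \<Longrightarrow> coeff (q j) f \<noteq> 0 \<Longrightarrow> f + lexp j \<in> Delta lexp j"
    and "(\<Sum>j<r. leading_part D (q j) j e) + c \<in> Qh"
  shows "c \<in> Qh" and "j < r \<Longrightarrow> e = f + lexp j \<Longrightarrow> coeff (q j) f \<in> Qh"
proof -
  have outside: "e \<notin> Delta lexp j" if "j < r" for j
    using assms(1) that Delta_bar_iff by blast
  have "leading_part D (q j) j e = 0" if "j < r" for j
    by (rule leading_part_eq_0_outside[OF assms(2)[OF that] q_supp[OF that] outside[OF that]])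
  then have "(\<Sum>j<r. leading_part D (q j) j e) = 0"
    by (intro sum.neutral) simp
  then show "c \<in> Qh"
    using assms(4) by simp
  show "coeff (q j) f \<in> Qh" if "j < r" "e = f + lexp j"
  proof -
    have "coeff (q j) f = 0"
      using q_supp outside that by blast
    then show ?thesis
      using Qh_0 by simp
  qed
qed

lemma coeff_in_Qh_at_Delta:
  assumes "j0 < r" and "e \<in> Delta lexp j0"
    and qD: "\<And>j. j < r \<Longrightarrow> deg_bounded (q j) D" and q_Ch: "\<And>j f. j < r \<Longrightarrow> coeff (q j) f \<in> Ch"
    and q_supp: "\<And>j f. j < r \<Longrightarrow> coeff (q j) f \<noteq> 0 \<Longrightarrow> f + lexp j \<in> Delta lexp j"
    and "(\<Sum>j<r. leading_part D (q j) j e) \<in> Qh"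
  shows "j < r \<Longrightarrow> e = f + lexp j \<Longrightarrow> coeff (q j) f \<in> Qh"
proof -
  obtain f0 where f0: "e = f0 + lexp j0"
    using assms(2) Delta_subset_cone cone_iff by (metis add.commute subsetD)
  have outside: "e \<notin> Delta lexp j" if "j \<noteq> j0" for j
    using assms(2) Delta_disjoint that by blast
  have "leading_part D (q j) j e = 0" if "j < r" "j \<noteq> j0" for j
    by (rule leading_part_eq_0_outside[OF qD[OF that(1)] q_supp[OF that(1)] outside[OF that(2)]])
  then have "(\<Sum>j<r. leading_part D (q j) j e) = leading_part D (q j0) j0 e"
    using assms(1) by (simp add: sum.remove[of "{..<r}" j0])
  also have "\<dots> = coeff (q j0) f0 * lc j0"
    using leading_part_eq[OF qD[OF assms(1)]] f0 by simp
  finally have "coeff (q j0) f0 \<in> Qh"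
    using assms(6) Qh_if_mult_lc_in_Qh[OF assms(1) q_Ch[OF assms(1)]] by simp
  moreover assume "j < r" "e = f + lexp j"
  moreover have "coeff (q j) f = 0" if "j \<noteq> j0"
    using q_supp outside that \<open>j < r\<close> \<open>e = f + lexp j\<close> by blast
  ultimately show "coeff (q j) f \<in> Qh"
    using f0 Qh_0 by (cases "j = j0") simp_all
qed

lemma coeff_in_Qh_step:
  assumes "\<And>j. j < r \<Longrightarrow> deg_bounded (q j) D" and "\<And>j f. j < r \<Longrightarrow> coeff (q j) f \<in> Ch"
    and "\<And>j f. j < r \<Longrightarrow> coeff (q j) f \<noteq> 0 \<Longrightarrow> f + lexp j \<in> Delta lexp j"
    and R_supp: "\<And>e. coeff R e \<noteq> 0 \<Longrightarrow> e \<in> Delta_bar lexp r"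
    and "(\<Sum>j<r. coeff (dmult (q j) (g j)) e) + coeff R e \<in> Qh"
    and "\<And>j f. j < r \<Longrightarrow> e \<prec>\<^sub>h f + lexp j \<Longrightarrow> coeff (q j) f \<in> Qh"
  shows "(\<forall>j<r. \<forall>f. e = f + lexp j \<longrightarrow> coeff (q j) f \<in> Qh) \<and> coeff R e \<in> Qh"
proof -
  have lead: "(\<Sum>j<r. leading_part D (q j) j e) + coeff R e \<in> Qh"
    using assms(1,2,6,5) by (rule leading_parts_in_Qh)
  show ?thesis
  proof (cases "e \<in> Delta_bar lexp r")
    case True
    then show ?thesis
      using coeff_in_Qh_at_Delta_bar[OF True assms(1,3) lead] by blast
  next
    case False
    then obtain j0 where "j0 < r" "e \<in> Delta lexp j0"
      by (auto simp: Delta_bar_iff)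
    moreover have "coeff R e = 0"
      using False R_supp by blast
    ultimately show ?thesis
      using coeff_in_Qh_at_Delta[OF _ _ assms(1-3)] lead Qh_0 by fastforce
  qed
qed

lemma division_of_Qh_is_Qh:
  assumes q_in: "\<And>j. j < r \<Longrightarrow> q j \<in> dop_over Ch" and "wf_dop R"
    and q_supp: "\<And>j f. j < r \<Longrightarrow> coeff (q j) f \<noteq> 0 \<Longrightarrow> f + lexp j \<in> Delta lexp j"
    and R_supp: "\<And>e. coeff R e \<noteq> 0 \<Longrightarrow> e \<in> Delta_bar lexp r"
    and sum_Qh: "\<And>e. (\<Sum>j<r. coeff (dmult (q j) (g j)) e) + coeff R e \<in> Qh"
  shows "(\<forall>j<r. q j \<in> dop_over Qh) \<and> R \<in> dop_over Qh"
proof -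
  obtain D where qD: "\<And>j. j < r \<Longrightarrow> deg_bounded (q j) D"
    using deg_bounded_uniform[where F = q and r = r] q_in dop_over_wf wf_dop_iff_deg_bounded by metis
  have q_Ch: "\<And>j f. j < r \<Longrightarrow> coeff (q j) f \<in> Ch"
    using q_in dop_over_coeff by blast
  define Dg where "Dg = (\<Sum>j<r. mexp_deg (lexp j))"
  have Qh_at: "(\<forall>j<r. \<forall>f. e = f + lexp j \<longrightarrow> coeff (q j) f \<in> Qh) \<and> coeff R e \<in> Qh" for e
  proof (induction e rule: wf_induct_rule[OF wf_above_bounded[of "D + Dg"]])
    case (1 e)
    show ?case
    proof (rule coeff_in_Qh_step[OF qD q_Ch q_supp R_supp sum_Qh])
      fix j f assume j: "j < r" and above: "e \<prec>\<^sub>h f + lexp j"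
      show "coeff (q j) f \<in> Qh"
      proof (cases "mexp_deg f \<le> D")
        case True
        have "mexp_deg (lexp j) \<le> Dg"
          unfolding Dg_def using j by (intro member_le_sum) simp_all
        with True above have "(f + lexp j, e) \<in> above_bounded (D + Dg)"
          by (simp add: above_bounded_def)
        then show ?thesis
          using 1 j by blast
      next
        case False
        then have "coeff (q j) f = 0"
          using deg_boundedD[OF qD[OF j]] by blast
        then show ?thesis
          using Qh_0 by simp
      qed
    qed
  qed
  have "q j \<in> dop_over Qh" if "j < r" for j
  proof (rule dop_overI)
    show "wf_dop (q j)"
      using q_in[OF that] by (rule dop_over_wf)
    show "coeff (q j) f \<in> Qh" for f
      using Qh_at[of "f + lexp j"] that by blast
  qed
  moreover have "R \<in> dop_over Qh"
    using \<open>wf_dop R\<close> Qh_at by (intro dop_overI) blast+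
  ultimately show ?thesis
    by blast
qed

lemma division_repD:
  assumes "division_rep ord Q h r g P q R T"
  shows "\<And>j. j < r \<Longrightarrow> q j \<in> dop_over Ch" and "R \<in> dop_over Ch" and "T \<in> dop_over Qh"
    and "\<And>e. coeff P e = (\<Sum>j<r. coeff (dmult (q j) (g j)) e) + coeff R e + coeff T e"
    and "\<And>j f. j < r \<Longrightarrow> coeff (q j) f \<noteq> 0 \<Longrightarrow> f + lexp j \<in> Delta lexp j"
    and "\<And>e. coeff R e \<noteq> 0 \<Longrightarrow> e \<in> Delta_bar lexp r"
  using assms unfolding division_rep_iff by blast+

lemma division_rep_unique:
  assumes "division_rep ord Q h r g P q R T" and "division_rep ord Q h r g P q' R' T'"
  shows "(\<forall>j<r. dminus (q j) (q' j) \<in> dop_over Qh) \<and> dminus R R' \<in> dop_over Qh"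
proof (rule division_of_Qh_is_Qh)
  note rep = division_repD[OF assms(1)] and rep' = division_repD[OF assms(2)]
  show "dminus (q j) (q' j) \<in> dop_over Ch" if "j < r" for j
    using rep(1)[OF that] rep'(1)[OF that] Ch_diff by (rule dop_over_dminus)
  show "wf_dop (dminus R R')"
    using rep(2) rep'(2) by (intro wf_dop_dminus dop_over_wf)
  show "f + lexp j \<in> Delta lexp j" if "j < r" "coeff (dminus (q j) (q' j)) f \<noteq> 0" for j f
  proof -
    have "coeff (q j) f \<noteq> 0 \<or> coeff (q' j) f \<noteq> 0"
      using that(2) by (auto simp: coeff_dminus)
    then show ?thesis
      using rep(5) rep'(5) that(1) by blast
  qed
  show "e \<in> Delta_bar lexp r" if "coeff (dminus R R') e \<noteq> 0" for e
  proof -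
    have "coeff R e \<noteq> 0 \<or> coeff R' e \<noteq> 0"
      using that by (auto simp: coeff_dminus)
    then show ?thesis
      using rep(6) rep'(6) by blast
  qed
  show "(\<Sum>j<r. coeff (dmult (dminus (q j) (q' j)) (g j)) e) + coeff (dminus R R') e \<in> Qh" for e
  proof -
    have "(\<Sum>j<r. coeff (dmult (dminus (q j) (q' j)) (g j)) e) =
        (\<Sum>j<r. coeff (dmult (q j) (g j)) e - coeff (dmult (q' j) (g j)) e)"
      using rep(1) rep'(1) by (intro sum.cong refl coeff_dmult_dminus_left dop_over_wf) auto
    then have "(\<Sum>j<r. coeff (dmult (dminus (q j) (q' j)) (g j)) e) + coeff (dminus R R') e =
        ((\<Sum>j<r. coeff (dmult (q j) (g j)) e) + coeff R e) -
        ((\<Sum>j<r. coeff (dmult (q' j) (g j)) e) + coeff R' e)"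
      by (simp add: coeff_dminus sum_subtractf)
    also have "\<dots> = coeff T' e - coeff T e"
      using rep(4)[of e] rep'(4)[of e] by (simp add: algebra_simps)
    also have "\<dots> \<in> Qh"
      using rep(3) rep'(3) by (intro Qh_diff dop_over_coeff)
    finally show ?thesis .
  qed
qed

end

theorem mainTheorem3:
  fixes ord :: "('n::finite \<Rightarrow> nat) \<times> ('n \<Rightarrow> nat) \<Rightarrow> ('n \<Rightarrow> nat) \<times> ('n \<Rightarrow> nat) \<Rightarrow> bool"
    and Q :: "'c::idom set" and h :: 'c and r :: nat
    and g :: "nat \<Rightarrow> ('n, 'c fract) dop" and P :: "('n, 'c fract) dop"
  assumes C: "no_int_in_primes TYPE('c)"
    and adm: "admissible ord"
    and Qprime: "is_prime_ideal Q"
    and hQ: "h \<notin> Q"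
    and g_in: "\<forall>j<r. g j \<in> dop_over (loc_h h) - dop_over (locQ_h Q h)"
    and g_lc: "\<forall>j<r. lc_num_dvd Q (lc_modQ ord Q (g j)) h"
    and P_in: "P \<in> dop_over (loc_h h)"
  shows "(\<exists>q R T. division_rep ord Q h r g P q R T) \<and>
         (\<forall>q R T q' R' T'. division_rep ord Q h r g P q R T \<longrightarrow> division_rep ord Q h r g P q' R' T' \<longrightarrow>
            (\<forall>j<r. dminus (q j) (q' j) \<in> dop_over (locQ_h Q h)) \<and> dminus R R' \<in> dop_over (locQ_h Q h))"
proof -
  interpret division_setting ord Q h r g
    using adm Qprime hQ g_in g_lc by unfold_locales
  show ?thesis
    using division_rep_exists[OF P_in] division_rep_unique by blast
qed

end
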